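(* Let $V$ be a separable Banach space, $\alpha,\beta\in(0,1)$ with $\alpha(1+\beta)>1$, and $A\in C^\alpha_tC^{1+\beta}_{V,\mathrm{loc}}$. Then for any $x_0\in V$ there exists a unique maximal solution $x$ to $x_t=x_0+\int_0^tA(\mathrm{d} s,x_s)$, defined on $[0,T^\ast)\subset[0,T]$, such that either $T^\ast=T$ or $\lim_{t\to T^\ast}\|x_t\|_V=+\infty$. In particular, if $A\in C^\alpha_tC^{\beta,\lambda}_V\cap C^\alpha_tC^{1+\beta}_{V,\mathrm{loc}}$ with $\lambda\in(0,1]$, $\alpha(1+\beta)>1$ and $\beta+\lambda\le1$, then global existence and uniqueness holds.
   Context: Fix $T>0$. For $f:V\to W$ and $R>0$: $\llbracket f\rrbracket_{\beta,R}=\sup_{x\ne y,\|x\|,\|y\|\le R}\|f(x)-f(y)\|_W/\|x-y\|_V^\beta$, $\|f\|_{\beta,R}=\llbracket f\rrbracket_{\beta,R}+\sup_{\|x\|\le R}\|f(x)\|_W$; $\llbracket f\rrbracket_{\beta,\lambda}=\sup_{R\ge1}R^{-\lambda}\llbracket f\rrbracket_{\beta,R}$, $\|f\|_{\beta,\lambda}=\llbracket f\rrbracket_{\beta,\lambda}+\|f(0)\|_W$. Fields $A:[0,T]\times V\to V$ satisfy $A(0,\cdot)=0$, $A_{s,t}(x)=A(t,x)-A(s,x)$. $A\in C^\alpha_tC^{\beta}_{V,\mathrm{loc}}$ if $\sup_{s<t}\|A_{s,t}\|_{\beta,R}/|t-s|^\alpha<\infty$ for all $R$; $A\in C^\alpha_tC^{1+\beta}_{V,\mathrm{loc}}$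 if moreover $A(t,\cdot)$ is Fréchet differentiable and $DA$ (with values in $\mathcal L(V;V)$) satisfies the same local condition; $A\in C^\alpha_tC^{\beta,\lambda}_V$ if $\sup_{s<t}\|A_{s,t}\|_{\beta,\lambda}/|t-s|^\alpha<\infty$. Integral: $\int_s^tA(\mathrm{d} r,x_r)=\lim_{|\Pi|\to0}\sum_iA_{t_i,t_{i+1}}(x_{t_i})$ for $\gamma$-Hölder $x$ with $\alpha+\beta\gamma>1$. A solution on an interval $I$ starting at $0$ is a path that on each compact subinterval $[0,t]\subset I$ is $\gamma$-Hölder for some $\gamma$ with $\alpha+\beta\gamma>1$ and satisfies the identity; a maximal solution is one that cannot be extended. *)

theory Defs
  imports "HOL-Analysis.Analysis"
begin

text \<open>Time-Hoelder / local space-Hoelder class C^alpha_t C^beta_{V,loc} on [0,T]: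
  for every R>0, sup_{s<t} ||A_{s,t}||_{beta,R} / |t-s|^alpha < infinity, written out.\<close>
definition loc_holder_field ::
  "real \<Rightarrow> real \<Rightarrow> real \<Rightarrow> (real \<Rightarrow> 'a::real_normed_vector \<Rightarrow> 'b::real_normed_vector) \<Rightarrow> bool" where
  "loc_holder_field T \<alpha> \<beta> A \<longleftrightarrow>
     (\<forall>R>0. \<exists>C. \<forall>s t. 0 \<le> s \<and> s < t \<and> t \<le> T \<longrightarrow>
        (\<forall>x. norm x \<le> R \<longrightarrow> norm (A t x - A s x) \<le> C * (t - s) powr \<alpha>) \<and>
        (\<forall>x y. norm x \<le> R \<and> norm y \<le> R \<and> x \<noteq> y \<longrightarrow>
           norm ((A t x - A s x) - (A t y - A s y)) \<le> C * (t - s) powr \<alpha> * norm (x - y) powr \<beta>))"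

text \<open>C^alpha_t C^{1+beta}_{V,loc}: Frechet differentiable in space with derivative DA
  (values in bounded linear operators, operator norm), DA also in the local class.\<close>
definition loc_holder_field_1 ::
  "real \<Rightarrow> real \<Rightarrow> real \<Rightarrow> (real \<Rightarrow> 'a::real_normed_vector \<Rightarrow> 'a) \<Rightarrow> bool" where
  "loc_holder_field_1 T \<alpha> \<beta> A \<longleftrightarrow> loc_holder_field T \<alpha> \<beta> A \<and>
     (\<exists>DA :: real \<Rightarrow> 'a \<Rightarrow> ('a \<Rightarrow>\<^sub>L 'a).
        (\<forall>t\<in>{0..T}. \<forall>x. (A t has_derivative blinfun_apply (DA t x)) (at x)) \<and>
        loc_holder_field T \<alpha> \<beta> DA)"

text \<open>C^alpha_t C^{beta,lambda}_V: sup_{s<t} ||A_{s,t}||_{beta,lambda} / |t-s|^alpha < infinity,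
  where ||f||_{beta,lambda} = sup_{R>=1} R^{-lambda} [f]_{beta,R} + ||f(0)||, written out.\<close>
definition growth_holder_field ::
  "real \<Rightarrow> real \<Rightarrow> real \<Rightarrow> real \<Rightarrow> (real \<Rightarrow> 'a::real_normed_vector \<Rightarrow> 'b::real_normed_vector) \<Rightarrow> bool" where
  "growth_holder_field T \<alpha> \<beta> lam A \<longleftrightarrow>
     (\<exists>C. \<forall>s t. 0 \<le> s \<and> s < t \<and> t \<le> T \<longrightarrow>
        norm (A t 0 - A s 0) \<le> C * (t - s) powr \<alpha> \<and>
        (\<forall>R\<ge>1. \<forall>x y. norm x \<le> R \<and> norm y \<le> R \<and> x \<noteq> y \<longrightarrow>
           norm ((A t x - A s x) - (A t y - A s y)) \<le> C * (t - s) powr \<alpha> * R powr lam * norm (x - y) powr \<beta>))"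

definition holder_on :: "real \<Rightarrow> real set \<Rightarrow> (real \<Rightarrow> 'a::real_normed_vector) \<Rightarrow> bool" where
  "holder_on \<gamma> S x \<longleftrightarrow> (\<exists>C. \<forall>u\<in>S. \<forall>v\<in>S. norm (x u - x v) \<le> C * \<bar>u - v\<bar> powr \<gamma>)"

definition partition_of :: "(nat \<Rightarrow> real) \<Rightarrow> nat \<Rightarrow> real \<Rightarrow> real \<Rightarrow> bool" where
  "partition_of p n s t \<longleftrightarrow> p 0 = s \<and> p n = t \<and> (\<forall>i<n. p i < p (Suc i))"

definition riemann_sum :: "(real \<Rightarrow> 'a \<Rightarrow> 'a::real_normed_vector) \<Rightarrow> (real \<Rightarrow> 'a) \<Rightarrow> (nat \<Rightarrow> real) \<Rightarrow> nat \<Rightarrow> 'a" where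
  "riemann_sum A x p n = (\<Sum>i<n. A (p (Suc i)) (x (p i)) - A (p i) (x (p i)))"

definition young_has_integral :: "(real \<Rightarrow> 'a \<Rightarrow> 'a::real_normed_vector) \<Rightarrow> (real \<Rightarrow> 'a) \<Rightarrow> real \<Rightarrow> real \<Rightarrow> 'a \<Rightarrow> bool" where
  "young_has_integral A x s t I \<longleftrightarrow>
     (\<forall>\<epsilon>>0. \<exists>\<delta>>0. \<forall>p n. partition_of p n s t \<and> (\<forall>i<n. p (Suc i) - p i < \<delta>) \<longrightarrow>
        norm (riemann_sum A x p n - I) < \<epsilon>)"

definition is_solution :: "real \<Rightarrow> real \<Rightarrow> real \<Rightarrow> (real \<Rightarrow> 'a \<Rightarrow> 'a::real_normed_vector) \<Rightarrow> 'a \<Rightarrow> real set \<Rightarrow> (real \<Rightarrow> 'a) \<Rightarrow> bool" where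
  "is_solution T \<alpha> \<beta> A x0 I x \<longleftrightarrow>
     is_interval I \<and> 0 \<in> I \<and> I \<subseteq> {0..T} \<and>
     (\<forall>t\<in>I. \<exists>\<gamma>. 0 < \<gamma> \<and> \<gamma> \<le> 1 \<and> \<alpha> + \<beta> * \<gamma> > 1 \<and> holder_on \<gamma> {0..t} x) \<and>
     (\<forall>t\<in>I. young_has_integral A x 0 t (x t - x0))"

definition is_max_solution :: "real \<Rightarrow> real \<Rightarrow> real \<Rightarrow> (real \<Rightarrow> 'a \<Rightarrow> 'a::real_normed_vector) \<Rightarrow> 'a \<Rightarrow> real set \<Rightarrow> (real \<Rightarrow> 'a) \<Rightarrow> bool" where
  "is_max_solution T \<alpha> \<beta> A x0 I x \<longleftrightarrow>
     is_solution T \<alpha> \<beta> A x0 I x \<and>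
     \<not> (\<exists>J y. is_solution T \<alpha> \<beta> A x0 J y \<and> I \<subset> J \<and> (\<forall>t\<in>I. y t = x t))"

end

theory Submission
  imports Defs
begin

(* The Young integral of A along a gamma-Hoelder path is obtained from the sewing lemma
   applied to the germ A_{s,t}(x_s), whose defect is of order |t - s| powr (alpha + beta * gamma)
   with alpha + beta * gamma > 1. Because A is C^{1+beta} in space, the integral is Lipschitz in
   the alpha-Hoelder seminorm, with a constant of order h powr alpha on intervals of length h;
   Picard iteration therefore yields local solutions, and the same estimate yields uniqueness.
   The length of the existence interval depends only on a bound for the initial value, so a
   solution can be continued as long as it stays bounded: the union of all solutions is the
   maximal one, and it either lives on [0, T] or blows up. Under the growth condition with
   beta + lambda <= 1, the Hoelder constant H of a solution on a short interval with sup bound R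
   satisfies H <= C (1 + R) + R powr lambda * H powr beta / 2, which gives an a priori bound and
   hence global existence. *)

section \<open>Partitions and the sewing lemma\<close>

lemma partition_of_mono: "partition_of p n s t \<Longrightarrow> i \<le> j \<Longrightarrow> j \<le> n \<Longrightarrow> p i \<le> p j"
proof (induction j)
  case (Suc j)
  show ?case
  proof (cases "i = Suc j")
    case False
    then have "p i \<le> p j" using Suc by simp
    also have "p j < p (Suc j)" using Suc.prems unfolding partition_of_def by simp
    finally show ?thesis by simp
  qed simp
qed simp

lemma partition_of_strict_mono: "partition_of p n s t \<Longrightarrow> i < j \<Longrightarrow> j \<le> n \<Longrightarrow> p i < p j"
proof -
  assume P: "partition_of p n s t" and ij: "i < j" "j \<le> n"
  then obtain j' where j': "j = Suc j'" by (cases j) auto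
  have "p i \<le> p j'" using partition_of_mono[OF P] ij j' by auto
  also have "p j' < p j" using P ij j' unfolding partition_of_def by auto
  finally show ?thesis .
qed

lemma partition_of_le_iff:
  "partition_of p n s t \<Longrightarrow> i \<le> n \<Longrightarrow> j \<le> n \<Longrightarrow> p i \<le> p j \<longleftrightarrow> i \<le> j"
  using partition_of_strict_mono[of p n s t j i] partition_of_mono[of p n s t i j] by (cases "i \<le> j") auto

lemma partition_of_range: "partition_of p n s t \<Longrightarrow> i \<le> n \<Longrightarrow> s \<le> p i \<and> p i \<le> t"
  using partition_of_mono[of p n s t 0 i] partition_of_mono[of p n s t i n]
  unfolding partition_of_def by auto

lemma partition_of_less: "partition_of p n s t \<Longrightarrow> 0 < n \<Longrightarrow> s < t"
  using partition_of_strict_mono[of p n s t 0 n] unfolding partition_of_def by auto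

lemma partition_of_0: "partition_of p 0 s t \<longleftrightarrow> p 0 = s \<and> s = t"
  unfolding partition_of_def by auto

lemma partition_of_degenerate: "partition_of p n s s \<Longrightarrow> n = 0"
  using partition_of_less by fastforce

lemma partition_of_take: "partition_of p n s t \<Longrightarrow> k \<le> n \<Longrightarrow> partition_of p k s (p k)"
  unfolding partition_of_def by auto

lemma partition_of_drop:
  "partition_of p n s t \<Longrightarrow> k \<le> n \<Longrightarrow> partition_of (\<lambda>i. p (k + i)) (n - k) (p k) t"
  unfolding partition_of_def by auto

lemma partition_of_straddle:
  assumes P: "partition_of p n s t" and m: "s \<le> m" "m < t"
  obtains k where "k < n" "p k \<le> m" "m < p (Suc k)"
proof -
  define k where "k = Max {k. k \<le> n \<and> p k \<le> m}"
  have fin: "finite {k. k \<le> n \<and> p k \<le> m}" by auto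
  have "0 \<in> {k. k \<le> n \<and> p k \<le> m}" using P m unfolding partition_of_def by auto
  then have k: "k \<le> n" "p k \<le> m" using Max_in[OF fin] unfolding k_def by blast+
  have "k \<noteq> n" using k P m unfolding partition_of_def by auto
  with k have "k < n" by simp
  moreover have "m < p (Suc k)"
  proof (rule ccontr)
    assume "\<not> m < p (Suc k)"
    then have "Suc k \<le> k" using Max_ge[OF fin, of "Suc k"] \<open>k < n\<close> unfolding k_def by simp
    then show False by simp
  qed
  ultimately show ?thesis using k that by blast
qed

lemma partition_gaps_sum: "partition_of p n s t \<Longrightarrow> (\<Sum>i<n. p (Suc i) - p i) = t - s"
  unfolding partition_of_def by (simp add: sum_lessThan_telescope)

definition uniform_partition :: "real \<Rightarrow> real \<Rightarrow> nat \<Rightarrow> nat \<Rightarrow> real" where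
  "uniform_partition s t N i = s + (t - s) * real i / real (Suc N)"

lemma partition_of_uniform: "s < t \<Longrightarrow> partition_of (uniform_partition s t N) (Suc N) s t"
  unfolding partition_of_def uniform_partition_def
  by (auto intro!: divide_strict_right_mono mult_strict_left_mono)

lemma uniform_partition_gap:
  "uniform_partition s t N (Suc i) - uniform_partition s t N i = (t - s) / real (Suc N)"
  unfolding uniform_partition_def by (simp add: diff_divide_distrib[symmetric] algebra_simps)

lemma uniform_partition_fine:
  assumes "s < t" "\<delta> > 0"
  shows "\<exists>N0. \<forall>N\<ge>N0. \<forall>i. uniform_partition s t N (Suc i) - uniform_partition s t N i < \<delta>"
proof -
  obtain N0 :: nat where N0: "(t - s) / \<delta> < real N0" using reals_Archimedean2 by blast
  have "(t - s) / real (Suc N) < \<delta>" if "N0 \<le> N" for N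
  proof -
    have "(t - s) / \<delta> < real (Suc N)" using N0 that by simp
    then show ?thesis using assms by (simp add: field_simps)
  qed
  then show ?thesis unfolding uniform_partition_gap by blast
qed

definition join_partitions :: "(nat \<Rightarrow> real) \<Rightarrow> nat \<Rightarrow> (nat \<Rightarrow> real) \<Rightarrow> nat \<Rightarrow> real" where
  "join_partitions p n q i = (if i \<le> n then p i else q (i - n))"

lemma partition_of_join:
  assumes P: "partition_of p n s u" and Q: "partition_of q m u t"
  shows "partition_of (join_partitions p n q) (n + m) s t"
  unfolding partition_of_def
proof (intro conjI allI impI)
  fix i assume i: "i < n + m"
  consider "Suc i \<le> n" | "n \<le> i" by linarith
  then show "join_partitions p n q i < join_partitions p n q (Suc i)"
  proof cases
    case 1 then show ?thesis using P by (simp add: join_partitions_def partition_of_def)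
  next
    case 2
    then have "Suc i - n = Suc (i - n)" "i - n < m" using i by auto
    then show ?thesis using 2 P Q by (auto simp: join_partitions_def partition_of_def)
  qed
qed (use P Q in \<open>auto simp: join_partitions_def partition_of_def\<close>)

lemma join_partitions_gaps:
  assumes P: "partition_of p n s u" and Q: "partition_of q m u t" and i: "i < n + m"
  obtains j where "j < n" "join_partitions p n q (Suc i) - join_partitions p n q i = p (Suc j) - p j"
  | j where "j < m" "join_partitions p n q (Suc i) - join_partitions p n q i = q (Suc j) - q j"
proof -
  consider "Suc i \<le> n" | "n \<le> i" by linarith
  then show ?thesis
  proof cases
    case 1 then show ?thesis using that(1)[of i] by (simp add: join_partitions_def)
  next
    case 2
    then have "Suc i - n = Suc (i - n)" by auto
    then show ?thesis using that(2)[of "i - n"] 2 i P Q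
      by (auto simp: join_partitions_def partition_of_def)
  qed
qed

definition refines :: "(nat \<Rightarrow> real) \<Rightarrow> nat \<Rightarrow> (nat \<Rightarrow> real) \<Rightarrow> nat \<Rightarrow> bool" where
  "refines q m p n \<longleftrightarrow> (\<forall>i\<le>n. \<exists>j\<le>m. q j = p i)"

lemma common_refinement:
  assumes P: "partition_of p n s t" and Q: "partition_of q m s t"
  obtains r N where "partition_of r N s t" "refines r N p n" "refines r N q m"
proof -
  define S where "S = p ` {..n} \<union> q ` {..m}"
  define L where "L = sorted_list_of_set S"
  define N where "N = length L - 1"
  have setL: "set L = S" unfolding L_def S_def by simp
  have sorted: "sorted_wrt (<) L" unfolding L_def by (rule strict_sorted_list_of_set)
  have S_range: "\<forall>x\<in>S. s \<le> x \<and> x \<le> t"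
    unfolding S_def using partition_of_range[OF P] partition_of_range[OF Q] by auto
  have st_S: "s \<in> S" "t \<in> S" unfolding S_def using P unfolding partition_of_def by force+
  then have "length L > 0" using setL by auto
  then have lt: "\<And>i j. i < j \<Longrightarrow> j \<le> N \<Longrightarrow> L ! i < L ! j"
    using sorted unfolding N_def by (auto simp: sorted_wrt_iff_nth_less)
  have inS: "L ! j \<in> S" if "j \<le> N" for j
  proof -
    have "j < length L" using that \<open>length L > 0\<close> unfolding N_def by linarith
    then show ?thesis using setL nth_mem by blast
  qed
  have idx: "\<exists>j\<le>N. L ! j = x" if "x \<in> S" for x
    using that setL unfolding N_def by (metis in_set_conv_nth le_diff_conv2 less_Suc_eq_le
        Suc_eq_plus1 \<open>length L > 0\<close> One_nat_def Suc_leI)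
  have "L ! 0 = s"
    using idx[OF st_S(1)] lt[of 0] S_range inS[of 0] by (metis le0 less_le_not_le not_gr0)
  moreover have "L ! N = t"
    using idx[OF st_S(2)] lt[of _ N] S_range inS[of N] by (metis le_less not_le)
  ultimately have "partition_of (\<lambda>j. L ! j) N s t" unfolding partition_of_def using lt by auto
  moreover have "refines (\<lambda>j. L ! j) N p n" "refines (\<lambda>j. L ! j) N q m"
    unfolding refines_def using idx unfolding S_def by blast+
  ultimately show ?thesis using that by blast
qed

definition partition_sum :: "(real \<Rightarrow> real \<Rightarrow> 'a::real_normed_vector) \<Rightarrow> (nat \<Rightarrow> real) \<Rightarrow> nat \<Rightarrow> 'a" where
  "partition_sum G p n = (\<Sum>i<n. G (p i) (p (Suc i)))"

lemma partition_sum_0 [simp]: "partition_sum G p 0 = 0"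
  by (simp add: partition_sum_def)

lemma partition_sum_split:
  "k \<le> n \<Longrightarrow> partition_sum G p n = partition_sum G p k + partition_sum G (\<lambda>i. p (k + i)) (n - k)"
proof (induction n)
  case (Suc n)
  show ?case
  proof (cases "k = Suc n")
    case False
    then have "k \<le> n" "Suc n - k = Suc (n - k)" using Suc.prems by auto
    then show ?thesis using Suc.IH by (simp add: partition_sum_def add.assoc)
  qed simp
qed simp

lemma partition_sum_cong: "(\<And>i. i \<le> n \<Longrightarrow> p i = q i) \<Longrightarrow> partition_sum G p n = partition_sum G q n"
  unfolding partition_sum_def by (intro sum.cong) auto

lemma partition_sum_diff:
  "partition_sum (\<lambda>x y. G x y - H x y) p n = partition_sum G p n - partition_sum H p n"
  unfolding partition_sum_def by (simp add: sum_subtractf)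

lemma partition_sum_join:
  assumes "partition_of p n s u" "partition_of q m u t"
  shows "partition_sum G (join_partitions p n q) (n + m) = partition_sum G p n + partition_sum G q m"
proof -
  have "partition_sum G (join_partitions p n q) n = partition_sum G p n"
    by (rule partition_sum_cong) (simp add: join_partitions_def)
  moreover have "partition_sum G (\<lambda>i. join_partitions p n q (n + i)) m = partition_sum G q m"
    by (rule partition_sum_cong) (use assms in \<open>auto simp: join_partitions_def partition_of_def\<close>)
  ultimately show ?thesis using partition_sum_split[of n "n + m" G "join_partitions p n q"] by simp
qed

definition germ_has_integral ::
  "(real \<Rightarrow> real \<Rightarrow> 'a::real_normed_vector) \<Rightarrow> real \<Rightarrow> real \<Rightarrow> 'a \<Rightarrow> bool" where
  "germ_has_integral G s t I \<longleftrightarrow>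
     (\<forall>\<epsilon>>0. \<exists>\<delta>>0. \<forall>p n. partition_of p n s t \<and> (\<forall>i<n. p (Suc i) - p i < \<delta>) \<longrightarrow>
        norm (partition_sum G p n - I) < \<epsilon>)"

definition young_germ :: "(real \<Rightarrow> 'a \<Rightarrow> 'a::real_normed_vector) \<Rightarrow> (real \<Rightarrow> 'a) \<Rightarrow> real \<Rightarrow> real \<Rightarrow> 'a" where
  "young_germ A x u v = A v (x u) - A u (x u)"

lemma young_has_integral_iff_germ:
  "young_has_integral A x s t I \<longleftrightarrow> germ_has_integral (young_germ A x) s t I"
  unfolding young_has_integral_def germ_has_integral_def riemann_sum_def partition_sum_def young_germ_def
  by simp

lemma powr_split_le:
  fixes s u t :: real
  assumes "s \<le> u" "u \<le> t" "a \<ge> 0" "e \<ge> 0"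
  shows "(t - u) powr a * (u - s) powr e \<le> (t - s) powr (a + e)"
proof -
  have "(t - u) powr a * (u - s) powr e \<le> (t - s) powr a * (t - s) powr e"
    using assms by (intro mult_mono powr_mono2) auto
  then show ?thesis by (simp add: powr_add)
qed

lemma exists_small_powr_bound:
  fixes c e B :: real
  assumes "e > 0" "c \<ge> 0" "B > 0"
  obtains h where "h > 0" "\<And>h'. 0 \<le> h' \<Longrightarrow> h' \<le> h \<Longrightarrow> c * h' powr e \<le> B"
proof
  define h where "h = (B / (c + 1)) powr (1 / e)"
  show "h > 0" unfolding h_def using assms by simp
  fix h' assume h': "0 \<le> h'" "h' \<le> h"
  have "c * h' powr e \<le> c * h powr e" using h' assms by (intro mult_left_mono powr_mono2) auto
  also have "h powr e = B / (c + 1)" unfolding h_def using assms by (simp add: powr_powr)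
  also have "c * (B / (c + 1)) \<le> B" using assms by (simp add: field_simps)
  finally show "c * h' powr e \<le> B" .
qed

text \<open>The bisection argument below needs \<open>C * 2 powr (1 - \<theta>) + 2 = C\<close>.\<close>

definition sewing_const :: "real \<Rightarrow> real" where
  "sewing_const \<theta> = 2 / (1 - 2 powr (1 - \<theta>))"

lemma sewing_const_pos: "\<theta> > 1 \<Longrightarrow> sewing_const \<theta> > 0"
  unfolding sewing_const_def using powr_less_mono[of "1 - \<theta>" 0 2] by simp

lemma sewing_const_eq: "\<theta> > 1 \<Longrightarrow> sewing_const \<theta> * 2 powr (1 - \<theta>) + 2 = sewing_const \<theta>"
  unfolding sewing_const_def using powr_less_mono[of "1 - \<theta>" 0 2] by (simp add: field_simps)

lemma norm_add_diff_diff_le: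
  "norm (a + b - c - d) \<le> norm a + norm b + norm c + norm (d::'a::real_normed_vector)"
proof -
  have "norm (a + b - c - d) \<le> norm (a + b - c) + norm d" by (rule norm_triangle_ineq4)
  also have "norm (a + b - c) \<le> norm (a + b) + norm c" by (rule norm_triangle_ineq4)
  also have "norm (a + b) \<le> norm a + norm b" by (rule norm_triangle_ineq)
  finally show ?thesis by simp
qed

lemma partition_sum_sewing_bound:
  fixes G :: "real \<Rightarrow> real \<Rightarrow> 'a::real_normed_vector"
  assumes \<theta>: "\<theta> > 1" and K: "K \<ge> 0"
    and \<delta>G: "\<And>s u t. a \<le> s \<Longrightarrow> s \<le> u \<Longrightarrow> u \<le> t \<Longrightarrow> t \<le> b \<Longrightarrow>
              norm (G s t - G s u - G u t) \<le> K * (t - s) powr \<theta>"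
  shows "partition_of p n s t \<Longrightarrow> a \<le> s \<Longrightarrow> t \<le> b \<Longrightarrow>
           norm (partition_sum G p n - G s t) \<le> sewing_const \<theta> * K * (t - s) powr \<theta>"
proof (induction n arbitrary: p s t rule: less_induct)
  case (less n)
  note P = less.prems(1)
  show ?case
  proof (cases "n = 0")
    case True
    then have "s = t" using P partition_of_0 by auto
    then have "G s t = 0" using \<delta>G[of s s s] less.prems by simp
    then show ?thesis using True sewing_const_pos[OF \<theta>] K by simp
  next
    case False
    text \<open>Split at the partition interval \<open>[u, v]\<close> containing the midpoint of \<open>[s, t]\<close>.\<close>
    have st: "s < t" using partition_of_less[OF P] False by auto
    obtain k where k: "k < n" "p k \<le> (s + t) / 2" "(s + t) / 2 < p (Suc k)"
      using partition_of_straddle[OF P, of "(s + t) / 2"] st by auto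
    define u v where "u = p k" and "v = p (Suc k)"
    define q where "q i = p (Suc k + i)" for i
    have u: "s \<le> u" "u - s \<le> (t - s) / 2" and v: "v \<le> t" "t - v \<le> (t - s) / 2" "u \<le> v"
      using partition_of_range[OF P, of k] partition_of_range[OF P, of "Suc k"] k
      unfolding u_def v_def by auto
    have IH1: "norm (partition_sum G p k - G s u) \<le> sewing_const \<theta> * K * (u - s) powr \<theta>"
      using less.IH[OF k(1) partition_of_take[OF P]] k less.prems u unfolding u_def v_def by auto
    have IH2: "norm (partition_sum G q (n - Suc k) - G v t) \<le> sewing_const \<theta> * K * (t - v) powr \<theta>"
      using less.IH[OF _ partition_of_drop[OF P, of "Suc k"]] k less.prems v unfolding u_def v_def q_def by auto
    have split: "partition_sum G p n = partition_sum G p k + G u v + partition_sum G q (n - Suc k)"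
      using partition_sum_split[of "Suc k" n G p] k unfolding u_def v_def q_def
      by (simp add: partition_sum_def)
    have "partition_sum G p n - G s t = (partition_sum G p k - G s u) + (partition_sum G q (n - Suc k) - G v t)
        - (G s v - G s u - G u v) - (G s t - G s v - G v t)"
      using split by (simp add: algebra_simps)
    then have "norm (partition_sum G p n - G s t) \<le> norm (partition_sum G p k - G s u)
        + norm (partition_sum G q (n - Suc k) - G v t) + norm (G s v - G s u - G u v) + norm (G s t - G s v - G v t)"
      by (simp only: norm_add_diff_diff_le)
    also have "\<dots> \<le> sewing_const \<theta> * K * ((t - s) / 2) powr \<theta> + sewing_const \<theta> * K * ((t - s) / 2) powr \<theta>
        + K * (t - s) powr \<theta> + K * (t - s) powr \<theta>"
    proof -
      have c: "sewing_const \<theta> * K \<ge> 0" using sewing_const_pos[OF \<theta>] K by simp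
      have "sewing_const \<theta> * K * (u - s) powr \<theta> \<le> sewing_const \<theta> * K * ((t - s) / 2) powr \<theta>"
        "sewing_const \<theta> * K * (t - v) powr \<theta> \<le> sewing_const \<theta> * K * ((t - s) / 2) powr \<theta>"
        "K * (v - s) powr \<theta> \<le> K * (t - s) powr \<theta>"
        using u v \<theta> c K by (auto intro!: mult_left_mono powr_mono2)
      moreover have "norm (G s v - G s u - G u v) \<le> K * (v - s) powr \<theta>"
        "norm (G s t - G s v - G v t) \<le> K * (t - s) powr \<theta>"
        using \<delta>G less.prems u v by auto
      ultimately show ?thesis using IH1 IH2 by linarith
    qed
    also have "\<dots> = (sewing_const \<theta> * 2 powr (1 - \<theta>) + 2) * K * (t - s) powr \<theta>"
      using st by (simp add: powr_divide powr_diff field_simps)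
    also have "\<dots> = sewing_const \<theta> * K * (t - s) powr \<theta>" using sewing_const_eq[OF \<theta>] by simp
    finally show ?thesis .
  qed
qed

lemma refinement_sum_bound:
  fixes G :: "real \<Rightarrow> real \<Rightarrow> 'a::real_normed_vector"
  assumes \<theta>: "\<theta> > 1" and K: "K \<ge> 0"
    and \<delta>G: "\<And>s u t. a \<le> s \<Longrightarrow> s \<le> u \<Longrightarrow> u \<le> t \<Longrightarrow> t \<le> b \<Longrightarrow>
              norm (G s t - G s u - G u t) \<le> K * (t - s) powr \<theta>"
  shows "partition_of p n s t \<Longrightarrow> partition_of q m s t \<Longrightarrow> refines q m p n \<Longrightarrow> a \<le> s \<Longrightarrow> t \<le> b \<Longrightarrow>
    norm (partition_sum G q m - partition_sum G p n) \<le> (\<Sum>i<n. sewing_const \<theta> * K * (p (Suc i) - p i) powr \<theta>)"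
proof (induction n arbitrary: p q m s)
  case 0
  then have "s = t" using partition_of_0 by auto
  then have "m = 0" using partition_of_degenerate 0 by auto
  then show ?case by simp
next
  case (Suc n)
  note P = Suc.prems(1) and Q = Suc.prems(2)
  text \<open>Peel off the first interval \<open>[s, p 1]\<close> of the coarse partition, which is \<open>[q 0, q j]\<close>.\<close>
  obtain j where j: "j \<le> m" "q j = p 1" using Suc.prems(3) unfolding refines_def by force
  have p1: "s < p 1" using partition_of_strict_mono[OF P, of 0 1] P unfolding partition_of_def by auto
  have Q1: "partition_of q j s (p 1)" using partition_of_take[OF Q j(1)] j by simp
  have Q2: "partition_of (\<lambda>i. q (j + i)) (m - j) (p 1) t" using partition_of_drop[OF Q j(1)] j by simp
  have P2: "partition_of (\<lambda>i. p (1 + i)) n (p 1) t" using partition_of_drop[OF P, of 1] by simp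
  have "refines (\<lambda>i. q (j + i)) (m - j) (\<lambda>i. p (1 + i)) n"
    unfolding refines_def
  proof (intro allI impI)
    fix i assume i: "i \<le> n"
    obtain j' where j': "j' \<le> m" "q j' = p (1 + i)" using Suc.prems(3) i unfolding refines_def by force
    have "q j \<le> q j'" using partition_of_mono[OF P, of 1 "1 + i"] i j j' by simp
    then have "j \<le> j'" using partition_of_le_iff[OF Q j(1) j'(1)] by simp
    then show "\<exists>j''\<le>m - j. q (j + j'') = p (1 + i)" using j' by (intro exI[of _ "j' - j"]) auto
  qed
  then have IH: "norm (partition_sum G (\<lambda>i. q (j + i)) (m - j) - partition_sum G (\<lambda>i. p (1 + i)) n)
      \<le> (\<Sum>i<n. sewing_const \<theta> * K * (p (1 + Suc i) - p (1 + i)) powr \<theta>)"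
    using Suc.IH[OF P2 Q2] Suc.prems p1 by auto
  have first: "norm (partition_sum G q j - G s (p 1)) \<le> sewing_const \<theta> * K * (p 1 - s) powr \<theta>"
    using partition_sum_sewing_bound[OF \<theta> K \<delta>G Q1] Suc.prems p1 partition_of_range[OF P, of 1] by auto
  have "partition_sum G q m - partition_sum G p (Suc n) = (partition_sum G q j - G s (p 1)) +
      (partition_sum G (\<lambda>i. q (j + i)) (m - j) - partition_sum G (\<lambda>i. p (1 + i)) n)"
    using partition_sum_split[of j m G q] partition_sum_split[of 1 "Suc n" G p] j P
    by (simp add: partition_sum_def partition_of_def)
  then have "norm (partition_sum G q m - partition_sum G p (Suc n)) \<le> sewing_const \<theta> * K * (p 1 - s) powr \<theta> +
     (\<Sum>i<n. sewing_const \<theta> * K * (p (1 + Suc i) - p (1 + i)) powr \<theta>)"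
    using norm_triangle_le[OF add_mono[OF first IH]] by simp
  also have "\<dots> = (\<Sum>i<Suc n. sewing_const \<theta> * K * (p (Suc i) - p i) powr \<theta>)"
    unfolding sum.lessThan_Suc_shift using P by (simp add: partition_of_def)
  finally show ?case .
qed

lemma partition_gap_powr_sum_le:
  assumes P: "partition_of p n s t" and \<theta>: "\<theta> > 1" and c: "c \<ge> 0" and mesh: "\<forall>i<n. p (Suc i) - p i < \<delta>"
  shows "(\<Sum>i<n. c * (p (Suc i) - p i) powr \<theta>) \<le> c * \<delta> powr (\<theta> - 1) * (t - s)"
proof -
  have "(\<Sum>i<n. c * (p (Suc i) - p i) powr \<theta>) \<le> (\<Sum>i<n. c * \<delta> powr (\<theta> - 1) * (p (Suc i) - p i))"
  proof (intro sum_mono)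
    fix i assume i: "i \<in> {..<n}"
    have g: "0 < p (Suc i) - p i" using P i unfolding partition_of_def by auto
    have "(p (Suc i) - p i) powr \<theta> = (p (Suc i) - p i) powr (\<theta> - 1) * (p (Suc i) - p i)"
      using g by (simp add: powr_diff)
    also have "\<dots> \<le> \<delta> powr (\<theta> - 1) * (p (Suc i) - p i)"
      using g mesh i \<theta> by (intro mult_right_mono powr_mono2) auto
    finally show "c * (p (Suc i) - p i) powr \<theta> \<le> c * \<delta> powr (\<theta> - 1) * (p (Suc i) - p i)"
      using c by (simp add: mult_left_mono mult.assoc)
  qed
  also have "\<dots> = c * \<delta> powr (\<theta> - 1) * (t - s)"
    using partition_gaps_sum[OF P] by (simp add: sum_distrib_left[symmetric])
  finally show ?thesis .
qed

lemma partition_sums_cauchy: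
  fixes G :: "real \<Rightarrow> real \<Rightarrow> 'a::real_normed_vector"
  assumes \<theta>: "\<theta> > 1" and K: "K \<ge> 0"
    and \<delta>G: "\<And>s u t. a \<le> s \<Longrightarrow> s \<le> u \<Longrightarrow> u \<le> t \<Longrightarrow> t \<le> b \<Longrightarrow>
              norm (G s t - G s u - G u t) \<le> K * (t - s) powr \<theta>"
    and P: "partition_of p n s t" and Q: "partition_of q m s t" and ab: "a \<le> s" "t \<le> b"
    and mesh: "\<forall>i<n. p (Suc i) - p i < \<delta>" "\<forall>i<m. q (Suc i) - q i < \<delta>"
  shows "norm (partition_sum G p n - partition_sum G q m) \<le> 2 * sewing_const \<theta> * K * \<delta> powr (\<theta> - 1) * (t - s)"
proof -
  obtain r N where R: "partition_of r N s t" "refines r N p n" "refines r N q m"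
    using common_refinement[OF P Q] by blast
  have c: "sewing_const \<theta> * K \<ge> 0" using sewing_const_pos[OF \<theta>] K by simp
  have "norm (partition_sum G r N - partition_sum G p n) \<le> sewing_const \<theta> * K * \<delta> powr (\<theta> - 1) * (t - s)"
    using refinement_sum_bound[OF \<theta> K \<delta>G P R(1,2) ab] partition_gap_powr_sum_le[OF P \<theta> c mesh(1)] by simp
  moreover have "norm (partition_sum G r N - partition_sum G q m) \<le> sewing_const \<theta> * K * \<delta> powr (\<theta> - 1) * (t - s)"
    using refinement_sum_bound[OF \<theta> K \<delta>G Q R(1,3) ab] partition_gap_powr_sum_le[OF Q \<theta> c mesh(2)] by simp
  ultimately show ?thesis
    using norm_triangle_ineq4[of "partition_sum G r N - partition_sum G q m" "partition_sum G r N - partition_sum G p n"]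
    by simp
qed

lemma germ_has_integral_trivial: "germ_has_integral G s s 0"
  unfolding germ_has_integral_def
proof (intro allI impI exI[of _ 1] conjI)
  fix \<epsilon> :: real and p n assume "\<epsilon> > 0" "partition_of p n s s \<and> (\<forall>i<n. p (Suc i) - p i < 1)"
  then have "n = 0" using partition_of_degenerate by blast
  then show "norm (partition_sum G p n - 0) < \<epsilon>" using \<open>\<epsilon> > 0\<close> by simp
qed simp

lemma germ_has_integral_bound:
  assumes st: "s \<le> t" and I: "germ_has_integral G s t I"
    and B: "\<And>p n. partition_of p n s t \<Longrightarrow> norm (partition_sum G p n - Z) \<le> B"
  shows "norm (I - Z) \<le> B"
proof -
  have fine: "\<exists>p n. partition_of p n s t \<and> (\<forall>i<n. p (Suc i) - p i < \<delta>)" if "\<delta> > 0" for \<delta>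
  proof (cases "s = t")
    case True
    then show ?thesis by (intro exI[of _ "\<lambda>_. s"] exI[of _ 0]) (simp add: partition_of_def)
  next
    case False
    with st have "s < t" by simp
    then obtain N where "\<forall>i. uniform_partition s t N (Suc i) - uniform_partition s t N i < \<delta>"
      using uniform_partition_fine[OF _ \<open>\<delta> > 0\<close>] by blast
    then show ?thesis using partition_of_uniform[OF \<open>s < t\<close>] by blast
  qed
  have "norm (I - Z) \<le> B + \<epsilon>" if "\<epsilon> > 0" for \<epsilon>
  proof -
    obtain \<delta> where "\<delta> > 0" and \<delta>: "\<forall>p n. partition_of p n s t \<and> (\<forall>i<n. p (Suc i) - p i < \<delta>) \<longrightarrow>
        norm (partition_sum G p n - I) < \<epsilon>"
      using I \<open>\<epsilon> > 0\<close> unfolding germ_has_integral_def by blast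
    then obtain p n where p: "partition_of p n s t" "\<forall>i<n. p (Suc i) - p i < \<delta>" using fine by blast
    have "norm (I - Z) \<le> norm (partition_sum G p n - I) + norm (partition_sum G p n - Z)"
      using norm_triangle_ineq4[of "partition_sum G p n - Z" "partition_sum G p n - I"]
      by (simp add: norm_minus_commute)
    moreover have "norm (partition_sum G p n - I) < \<epsilon>" using \<delta> p by blast
    ultimately show ?thesis using B[OF p(1)] by linarith
  qed
  then show ?thesis by (rule field_le_epsilon)
qed

lemma germ_has_integral_diff:
  assumes I: "germ_has_integral G s t I" and J: "germ_has_integral H s t J"
  shows "germ_has_integral (\<lambda>x y. G x y - H x y) s t (I - J)"
  unfolding germ_has_integral_def
proof (intro allI impI)
  fix \<epsilon> :: real assume "\<epsilon> > 0"
  then have "\<epsilon> / 2 > 0" by simp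
  then obtain \<delta>1 \<delta>2 where \<delta>: "\<delta>1 > 0" "\<delta>2 > 0"
    "\<forall>p n. partition_of p n s t \<and> (\<forall>i<n. p (Suc i) - p i < \<delta>1) \<longrightarrow> norm (partition_sum G p n - I) < \<epsilon>/2"
    "\<forall>p n. partition_of p n s t \<and> (\<forall>i<n. p (Suc i) - p i < \<delta>2) \<longrightarrow> norm (partition_sum H p n - J) < \<epsilon>/2"
    using I J unfolding germ_has_integral_def by blast
  show "\<exists>\<delta>>0. \<forall>p n. partition_of p n s t \<and> (\<forall>i<n. p (Suc i) - p i < \<delta>) \<longrightarrow>
          norm (partition_sum (\<lambda>x y. G x y - H x y) p n - (I - J)) < \<epsilon>"
  proof (intro exI[of _ "min \<delta>1 \<delta>2"] conjI allI impI)
    fix p n assume p: "partition_of p n s t \<and> (\<forall>i<n. p (Suc i) - p i < min \<delta>1 \<delta>2)"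
    have eq: "partition_sum (\<lambda>x y. G x y - H x y) p n - (I - J) =
        (partition_sum G p n - I) - (partition_sum H p n - J)"
      unfolding partition_sum_diff by (simp add: algebra_simps)
    have "norm (partition_sum G p n - I) < \<epsilon>/2" "norm (partition_sum H p n - J) < \<epsilon>/2"
      using \<delta>(3,4) p by auto
    then show "norm (partition_sum (\<lambda>x y. G x y - H x y) p n - (I - J)) < \<epsilon>"
      unfolding eq using norm_triangle_ineq4[of "partition_sum G p n - I" "partition_sum H p n - J"]
      by linarith
  qed (use \<delta> in simp)
qed

lemma germ_integral_unique:
  assumes "s \<le> t" "germ_has_integral G s t I" "germ_has_integral G s t J"
  shows "I = J"
proof -
  have "norm (I - J - 0) \<le> 0"
    by (rule germ_has_integral_bound[OF assms(1) germ_has_integral_diff[OF assms(2,3)]])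
      (simp add: partition_sum_def)
  then show ?thesis by simp
qed

lemma germ_integral_trivial: "germ_has_integral G s s I \<Longrightarrow> I = 0"
  using germ_integral_unique[OF order.refl _ germ_has_integral_trivial] by blast

lemma germ_has_integral_cong:
  assumes "\<And>x y. s \<le> x \<Longrightarrow> x \<le> y \<Longrightarrow> y \<le> t \<Longrightarrow> G x y = H x y"
  shows "germ_has_integral G s t I \<longleftrightarrow> germ_has_integral H s t I"
proof -
  have "partition_sum G p n = partition_sum H p n" if "partition_of p n s t" for p n
    unfolding partition_sum_def
  proof (intro sum.cong refl)
    fix i assume "i \<in> {..<n}"
    then show "G (p i) (p (Suc i)) = H (p i) (p (Suc i))"
      using assms partition_of_range[OF that, of i] partition_of_range[OF that, of "Suc i"]
        partition_of_mono[OF that, of i "Suc i"] by auto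
  qed
  then have "(partition_of p n s t \<and> (\<forall>i<n. p (Suc i) - p i < \<delta>) \<longrightarrow>
      norm (partition_sum G p n - I) < \<epsilon>) \<longleftrightarrow> (partition_of p n s t \<and>
      (\<forall>i<n. p (Suc i) - p i < \<delta>) \<longrightarrow> norm (partition_sum H p n - I) < \<epsilon>)" for p n \<delta> \<epsilon>
    by (cases "partition_of p n s t") simp_all
  then show ?thesis unfolding germ_has_integral_def by (simp only:)
qed

lemma germ_has_integral_if_cauchy:
  fixes G :: "real \<Rightarrow> real \<Rightarrow> 'a::banach"
  assumes st: "s < t" and \<theta>: "\<theta> > 1" and B: "B \<ge> 0"
    and cauchy: "\<And>p n q m \<delta>. partition_of p n s t \<Longrightarrow> partition_of q m s t \<Longrightarrow>
      \<forall>i<n. p (Suc i) - p i < \<delta> \<Longrightarrow> \<forall>i<m. q (Suc i) - q i < \<delta> \<Longrightarrow>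
      norm (partition_sum G p n - partition_sum G q m) \<le> B * \<delta> powr (\<theta> - 1)"
  shows "\<exists>I. germ_has_integral G s t I"
proof -
  define u where "u N = partition_sum G (uniform_partition s t N) (Suc N)" for N
  have small: "\<exists>\<delta>>0. B * \<delta> powr (\<theta> - 1) < \<epsilon>" if "\<epsilon> > 0" for \<epsilon>
  proof -
    have "\<theta> - 1 > 0" "\<epsilon> / 2 > 0" using \<theta> that by auto
    then obtain \<delta> where "\<delta> > 0" and \<delta>: "\<And>h. 0 \<le> h \<Longrightarrow> h \<le> \<delta> \<Longrightarrow> B * h powr (\<theta> - 1) \<le> \<epsilon> / 2"
      using exists_small_powr_bound[of "\<theta> - 1" B "\<epsilon> / 2"] B by blast
    then have "B * \<delta> powr (\<theta> - 1) \<le> \<epsilon> / 2" using \<delta>[of \<delta>] by simp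
    then have "B * \<delta> powr (\<theta> - 1) < \<epsilon>" using that by linarith
    then show ?thesis using \<open>\<delta> > 0\<close> by blast
  qed
  have u_close: "\<forall>\<^sub>F N in sequentially. norm (partition_sum G p n - u N) \<le> B * \<delta> powr (\<theta> - 1)"
    if "\<delta> > 0" "partition_of p n s t" "\<forall>i<n. p (Suc i) - p i < \<delta>" for p n \<delta>
  proof -
    obtain N0 where "\<forall>N\<ge>N0. \<forall>i. uniform_partition s t N (Suc i) - uniform_partition s t N i < \<delta>"
      using uniform_partition_fine[OF st \<open>\<delta> > 0\<close>] by blast
    then show ?thesis
      using cauchy[OF that(2) partition_of_uniform[OF st] that(3)] unfolding u_def eventually_sequentially
      by blast
  qed
  have "Cauchy u"
  proof (rule metric_CauchyI)
    fix \<epsilon> :: real assume "\<epsilon> > 0"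
    then obtain \<delta> where \<delta>: "\<delta> > 0" "B * \<delta> powr (\<theta> - 1) < \<epsilon>" using small by blast
    then obtain N0 where "\<forall>N\<ge>N0. \<forall>i. uniform_partition s t N (Suc i) - uniform_partition s t N i < \<delta>"
      using uniform_partition_fine[OF st] by blast
    then have "dist (u m) (u n) \<le> B * \<delta> powr (\<theta> - 1)" if "N0 \<le> m" "N0 \<le> n" for m n
      using cauchy[OF partition_of_uniform[OF st] partition_of_uniform[OF st]] that
      unfolding u_def dist_norm by blast
    then have "dist (u m) (u n) < \<epsilon>" if "N0 \<le> m" "N0 \<le> n" for m n
      using that \<delta>(2) by fastforce
    then show "\<exists>M. \<forall>m\<ge>M. \<forall>n\<ge>M. dist (u m) (u n) < \<epsilon>" by blast
  qed
  then obtain I where I: "u \<longlonglongrightarrow> I" using Cauchy_convergent_iff convergent_def by blast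
  have "germ_has_integral G s t I" unfolding germ_has_integral_def
  proof (intro allI impI)
    fix \<epsilon> :: real assume "\<epsilon> > 0"
    then obtain \<delta> where \<delta>: "\<delta> > 0" "B * \<delta> powr (\<theta> - 1) < \<epsilon>" using small by blast
    have "norm (partition_sum G p n - I) < \<epsilon>" if "partition_of p n s t" "\<forall>i<n. p (Suc i) - p i < \<delta>" for p n
    proof -
      have "(\<lambda>N. norm (partition_sum G p n - u N)) \<longlonglongrightarrow> norm (partition_sum G p n - I)"
        by (intro tendsto_intros I)
      then have "norm (partition_sum G p n - I) \<le> B * \<delta> powr (\<theta> - 1)"
        using u_close[OF \<delta>(1) that] by (rule tendsto_upperbound) simp
      then show ?thesis using \<delta> by simp
    qed
    then show "\<exists>\<delta>>0. \<forall>p n. partition_of p n s t \<and> (\<forall>i<n. p (Suc i) - p i < \<delta>) \<longrightarrow>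
        norm (partition_sum G p n - I) < \<epsilon>" using \<delta>(1) by blast
  qed
  then show ?thesis ..
qed

lemma sewing_lemma:
  fixes G :: "real \<Rightarrow> real \<Rightarrow> 'a::banach"
  assumes \<theta>: "\<theta> > 1" and K: "K \<ge> 0"
    and \<delta>G: "\<And>s u t. a \<le> s \<Longrightarrow> s \<le> u \<Longrightarrow> u \<le> t \<Longrightarrow> t \<le> b \<Longrightarrow>
              norm (G s t - G s u - G u t) \<le> K * (t - s) powr \<theta>"
    and st: "a \<le> s" "s \<le> t" "t \<le> b"
  obtains I where "germ_has_integral G s t I" "norm (I - G s t) \<le> sewing_const \<theta> * K * (t - s) powr \<theta>"
proof -
  obtain I where I: "germ_has_integral G s t I"
  proof (cases "s = t")
    case True
    then show ?thesis using germ_has_integral_trivial that by blast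
  next
    case False
    with st have "s < t" by simp
    moreover have B: "2 * sewing_const \<theta> * K * (t - s) \<ge> 0" using sewing_const_pos[OF \<theta>] K st by simp
    moreover have "norm (partition_sum G p n - partition_sum G q m) \<le>
        (2 * sewing_const \<theta> * K * (t - s)) * \<delta> powr (\<theta> - 1)"
      if "partition_of p n s t" "partition_of q m s t"
        "\<forall>i<n. p (Suc i) - p i < \<delta>" "\<forall>i<m. q (Suc i) - q i < \<delta>" for p n q m \<delta>
      using partition_sums_cauchy[OF \<theta> K \<delta>G that(1,2) st(1,3) that(3,4)] by (simp only: mult_ac)
    ultimately show ?thesis using germ_has_integral_if_cauchy[OF _ \<theta>] that by blast
  qed
  moreover have "norm (I - G s t) \<le> sewing_const \<theta> * K * (t - s) powr \<theta>"
    using germ_has_integral_bound[OF st(2) I] partition_sum_sewing_bound[OF \<theta> K \<delta>G _ st(1,3)] by blast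
  ultimately show ?thesis using that by blast
qed

lemma germ_has_integral_tendsto:
  assumes I: "germ_has_integral G s t I" and P: "\<And>N. partition_of (p N) (n N) s t"
    and mesh: "\<And>N i. i < n N \<Longrightarrow> p N (Suc i) - p N i \<le> d N" and d: "d \<longlonglongrightarrow> 0"
  shows "(\<lambda>N. partition_sum G (p N) (n N)) \<longlonglongrightarrow> I"
proof (rule LIMSEQ_I)
  fix \<epsilon> :: real assume "\<epsilon> > 0"
  then obtain \<delta> where "\<delta> > 0" and \<delta>: "\<forall>p n. partition_of p n s t \<and> (\<forall>i<n. p (Suc i) - p i < \<delta>) \<longrightarrow>
      norm (partition_sum G p n - I) < \<epsilon>"
    using I unfolding germ_has_integral_def by blast
  obtain N0 where N0: "\<forall>N\<ge>N0. norm (d N) < \<delta>" using LIMSEQ_D[OF d \<open>\<delta> > 0\<close>] by auto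
  have "norm (partition_sum G (p N) (n N) - I) < \<epsilon>" if "N \<ge> N0" for N
  proof -
    have "d N < \<delta>" using N0[rule_format, OF that] by (simp add: abs_less_iff)
    then have "\<forall>i<n N. p N (Suc i) - p N i < \<delta>" using mesh by (meson le_less_trans)
    then show ?thesis using \<delta> P[of N] by blast
  qed
  then show "\<exists>N0. \<forall>N\<ge>N0. norm (partition_sum G (p N) (n N) - I) < \<epsilon>" by blast
qed

lemma germ_integral_additive:
  fixes G :: "real \<Rightarrow> real \<Rightarrow> 'a::real_normed_vector"
  assumes su: "s \<le> u" and ut: "u \<le> t"
    and I1: "germ_has_integral G s u I1" and I2: "germ_has_integral G u t I2" and I: "germ_has_integral G s t I"
  shows "I = I1 + I2"
proof (cases "s = u \<or> u = t")
  case True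
  then show ?thesis
  proof
    assume "s = u"
    then have "germ_has_integral G u u I1" using I1 by simp
    then have "I1 = 0" by (rule germ_integral_trivial)
    moreover have "I = I2" using germ_integral_unique[OF ut I2] I \<open>s = u\<close> by simp
    ultimately show ?thesis by simp
  next
    assume "u = t"
    then have "germ_has_integral G t t I2" using I2 by simp
    then have "I2 = 0" by (rule germ_integral_trivial)
    moreover have "I = I1" using germ_integral_unique[OF su I1] I \<open>u = t\<close> by simp
    ultimately show ?thesis by simp
  qed
next
  case False
  with su ut have su': "s < u" and ut': "u < t" by auto
  text \<open>Compare the sums along uniform partitions of \<open>[s, u]\<close> and \<open>[u, t]\<close> with the sums along
    their concatenations, which are partitions of \<open>[s, t]\<close>.\<close>
  define d where "d N = (t - s) / real (Suc N)" for N
  define p1 p2 where "p1 N = uniform_partition s u N" and "p2 N = uniform_partition u t N" for N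
  have P1: "partition_of (p1 N) (Suc N) s u" and P2: "partition_of (p2 N) (Suc N) u t" for N
    unfolding p1_def p2_def using partition_of_uniform su' ut' by auto
  have gap1: "p1 N (Suc i) - p1 N i \<le> d N" and gap2: "p2 N (Suc i) - p2 N i \<le> d N" for N i
    unfolding p1_def p2_def d_def uniform_partition_gap using su ut by (simp_all add: divide_right_mono)
  have d: "d \<longlonglongrightarrow> 0"
    using tendsto_mult_right_zero[OF LIMSEQ_inverse_real_of_nat, of "t - s"] unfolding d_def
    by (simp add: divide_inverse)
  have "(\<lambda>N. partition_sum G (join_partitions (p1 N) (Suc N) (p2 N)) (Suc N + Suc N)) \<longlonglongrightarrow> I"
  proof (rule germ_has_integral_tendsto[OF I partition_of_join[OF P1 P2] _ d])
    fix N i assume "i < Suc N + Suc N"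
    then show "join_partitions (p1 N) (Suc N) (p2 N) (Suc i) - join_partitions (p1 N) (Suc N) (p2 N) i \<le> d N"
      by (rule join_partitions_gaps[OF P1 P2]) (use gap1 gap2 in auto)
  qed
  then have "(\<lambda>N. partition_sum G (p1 N) (Suc N) + partition_sum G (p2 N) (Suc N)) \<longlonglongrightarrow> I"
    unfolding partition_sum_join[OF P1 P2] .
  moreover have "(\<lambda>N. partition_sum G (p1 N) (Suc N) + partition_sum G (p2 N) (Suc N)) \<longlonglongrightarrow> I1 + I2"
    by (intro tendsto_add germ_has_integral_tendsto[OF I1 P1 gap1 d] germ_has_integral_tendsto[OF I2 P2 gap2 d])
  ultimately show ?thesis by (rule LIMSEQ_unique)
qed

section \<open>Hoelder bounds and a contraction principle\<close>

definition holder_bound :: "(real \<Rightarrow> 'a::real_normed_vector) \<Rightarrow> real \<Rightarrow> real \<Rightarrow> real \<Rightarrow> real \<Rightarrow> bool" where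
  "holder_bound x a b \<gamma> M \<longleftrightarrow>
     (\<forall>u v. a \<le> u \<longrightarrow> u \<le> v \<longrightarrow> v \<le> b \<longrightarrow> norm (x v - x u) \<le> M * (v - u) powr \<gamma>)"

lemma holder_boundD:
  "holder_bound x a b \<gamma> M \<Longrightarrow> a \<le> u \<Longrightarrow> u \<le> v \<Longrightarrow> v \<le> b \<Longrightarrow> norm (x v - x u) \<le> M * (v - u) powr \<gamma>"
  unfolding holder_bound_def by blast

lemma holder_bound_mono: "holder_bound x a b \<gamma> M \<Longrightarrow> M \<le> M' \<Longrightarrow> holder_bound x a b \<gamma> M'"
  unfolding holder_bound_def by (meson mult_right_mono order_trans powr_ge_zero)

lemma holder_bound_subinterval: "holder_bound x a b \<gamma> M \<Longrightarrow> a \<le> a' \<Longrightarrow> b' \<le> b \<Longrightarrow> holder_bound x a' b' \<gamma> M"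
  unfolding holder_bound_def by auto

lemma holder_bound_add:
  assumes "holder_bound x a b \<gamma> M1" "holder_bound y a b \<gamma> M2"
  shows "holder_bound (\<lambda>r. x r + y r) a b \<gamma> (M1 + M2)"
  unfolding holder_bound_def
proof (intro allI impI)
  fix u v assume uv: "a \<le> u" "u \<le> v" "v \<le> b"
  have "norm (x v + y v - (x u + y u)) \<le> norm (x v - x u) + norm (y v - y u)"
    using norm_triangle_ineq[of "x v - x u" "y v - y u"] by (simp add: algebra_simps)
  then show "norm (x v + y v - (x u + y u)) \<le> (M1 + M2) * (v - u) powr \<gamma>"
    using holder_boundD[OF assms(1) uv] holder_boundD[OF assms(2) uv] by (simp add: distrib_right)
qed

lemma holder_bound_diff:
  assumes "holder_bound x a b \<gamma> M1" "holder_bound y a b \<gamma> M2"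
  shows "holder_bound (\<lambda>r. x r - y r) a b \<gamma> (M1 + M2)"
  unfolding holder_bound_def
proof (intro allI impI)
  fix u v assume uv: "a \<le> u" "u \<le> v" "v \<le> b"
  have "norm (x v - y v - (x u - y u)) \<le> norm (x v - x u) + norm (y v - y u)"
    using norm_triangle_ineq4[of "x v - x u" "y v - y u"] by (simp add: algebra_simps)
  then show "norm (x v - y v - (x u - y u)) \<le> (M1 + M2) * (v - u) powr \<gamma>"
    using holder_boundD[OF assms(1) uv] holder_boundD[OF assms(2) uv] by (simp add: distrib_right)
qed

lemma holder_bound_norm_le:
  assumes "holder_bound w a b \<gamma> D" "w a = 0" "a \<le> t" "t \<le> b" "\<gamma> \<ge> 0" "D \<ge> 0"
  shows "norm (w t) \<le> D * (b - a) powr \<gamma>"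
proof -
  have "norm (w t) \<le> D * (t - a) powr \<gamma>" using holder_boundD[OF assms(1), of a t] assms by simp
  also have "\<dots> \<le> D * (b - a) powr \<gamma>" using assms by (intro mult_left_mono powr_mono2) auto
  finally show ?thesis .
qed

lemma holder_bound_limit:
  assumes lim: "\<And>t. a \<le> t \<Longrightarrow> t \<le> b \<Longrightarrow> (\<lambda>n. f n t) \<longlonglongrightarrow> g t"
    and bound: "\<And>n. n \<ge> N \<Longrightarrow> holder_bound (f n) a b \<gamma> D"
  shows "holder_bound g a b \<gamma> D"
  unfolding holder_bound_def
proof (intro allI impI)
  fix u v assume uv: "a \<le> u" "u \<le> v" "v \<le> b"
  have "(\<lambda>n. norm (f n v - f n u)) \<longlonglongrightarrow> norm (g v - g u)"
    using lim uv by (intro tendsto_intros) auto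
  moreover have "\<forall>\<^sub>F n in sequentially. norm (f n v - f n u) \<le> D * (v - u) powr \<gamma>"
    unfolding eventually_sequentially using bound uv holder_boundD by blast
  ultimately show "norm (g v - g u) \<le> D * (v - u) powr \<gamma>"
    by (rule tendsto_upperbound) simp
qed

lemma holder_bound_concat:
  assumes x: "holder_bound x a t \<gamma> M1" and y: "holder_bound y t b \<gamma> M2" and xy: "x t = y t"
    and M: "M1 \<ge> 0" "M2 \<ge> 0" and \<gamma>: "\<gamma> \<ge> 0"
  shows "holder_bound (\<lambda>r. if r \<le> t then x r else y r) a b \<gamma> (M1 + M2)"
  unfolding holder_bound_def
proof (intro allI impI)
  fix u v assume uv: "a \<le> u" "u \<le> v" "v \<le> b"
  have le: "M * (v' - u') powr \<gamma> \<le> (M1 + M2) * (v - u) powr \<gamma>"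
    if "M = M1 \<or> M = M2" "u \<le> u'" "u' \<le> v'" "v' \<le> v" for M u' v'
    using that M \<gamma> by (intro mult_mono powr_mono2) auto
  consider "v \<le> t" | "t \<le> u" | "u < t" "t < v" by linarith
  then show "norm ((if v \<le> t then x v else y v) - (if u \<le> t then x u else y u)) \<le> (M1 + M2) * (v - u) powr \<gamma>"
  proof cases
    case 1
    then show ?thesis using holder_boundD[OF x uv(1,2)] le[of M1 u v] uv by simp
  next
    case 2
    then show ?thesis using holder_boundD[OF y 2 uv(2,3)] le[of M2 u v] uv xy by (cases "u = t") auto
  next
    case 3
    have "norm (y v - x u) \<le> norm (y v - y t) + norm (x t - x u)"
      using xy norm_triangle_ineq[of "y v - y t" "x t - x u"] by simp
    also have "\<dots> \<le> M2 * (v - t) powr \<gamma> + M1 * (t - u) powr \<gamma>"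
      using holder_boundD[OF y order.refl _ uv(3)] holder_boundD[OF x uv(1) _ order.refl] 3 by simp
    also have "\<dots> \<le> (M1 + M2) * (v - u) powr \<gamma>"
      using M \<gamma> 3 by (simp add: distrib_right add_mono mult_left_mono powr_mono2 add.commute)
    finally show ?thesis using 3 by simp
  qed
qed

lemma holder_bound_imp_holder_on:
  assumes "holder_bound x a b \<gamma> M"
  shows "holder_on \<gamma> {a..b} x"
  unfolding holder_on_def
proof (intro exI[of _ M] ballI)
  fix u v assume "u \<in> {a..b}" "v \<in> {a..b}"
  then show "norm (x u - x v) \<le> M * \<bar>u - v\<bar> powr \<gamma>"
    using holder_boundD[OF assms, of u v] holder_boundD[OF assms, of v u]
    by (cases "u \<le> v") (auto simp: norm_minus_commute abs_if)
qed

lemma holder_on_imp_holder_bound: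
  assumes "holder_on \<gamma> {a..b} x"
  obtains M where "M \<ge> 0" "holder_bound x a b \<gamma> M"
proof -
  obtain C where C: "\<forall>u\<in>{a..b}. \<forall>v\<in>{a..b}. norm (x u - x v) \<le> C * \<bar>u - v\<bar> powr \<gamma>"
    using assms unfolding holder_on_def by blast
  have "holder_bound x a b \<gamma> (max C 0)"
    unfolding holder_bound_def
  proof (intro allI impI)
    fix u v assume uv: "a \<le> u" "u \<le> v" "v \<le> b"
    then have "norm (x v - x u) \<le> C * \<bar>v - u\<bar> powr \<gamma>" using C[rule_format, of v u] by simp
    also have "\<dots> \<le> max C 0 * (v - u) powr \<gamma>" using uv by (simp add: mult_right_mono)
    finally show "norm (x v - x u) \<le> max C 0 * (v - u) powr \<gamma>" .
  qed
  then show ?thesis by (intro that[of "max C 0"]) simp_all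
qed

lemma holder_bound_geometric_limit:
  fixes ys :: "nat \<Rightarrow> real \<Rightarrow> 'a::banach"
  assumes start: "\<And>n. ys n a = \<xi>" and D: "D \<ge> 0" and \<gamma>: "\<gamma> \<ge> 0"
    and step: "\<And>n. holder_bound (\<lambda>r. ys (Suc n) r - ys n r) a b \<gamma> (D * (1/2) ^ n)"
  obtains y where "\<And>t. a \<le> t \<Longrightarrow> t \<le> b \<Longrightarrow> (\<lambda>n. ys n t) \<longlonglongrightarrow> y t"
    "\<And>n. holder_bound (\<lambda>r. y r - ys n r) a b \<gamma> (2 * D * (1/2) ^ n)"
proof -
  have conv: "convergent (\<lambda>n. ys n t)" if t: "a \<le> t" "t \<le> b" for t
  proof -
    have "norm (ys (Suc n) t - ys n t) \<le> D * (1/2) ^ n * (b - a) powr \<gamma>" for n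
      using holder_bound_norm_le[OF step _ t \<gamma>] start D by simp
    then have bound: "norm (ys (Suc n) t - ys n t) \<le> D * (b - a) powr \<gamma> * (1/2) ^ n" for n
      by (simp add: mult_ac)
    have geometric: "summable (\<lambda>n. D * (b - a) powr \<gamma> * (1/2::real) ^ n)"
      by (intro summable_mult summable_geometric) simp
    have "summable (\<lambda>n. norm (ys (Suc n) t - ys n t))"
      using bound by (intro summable_comparison_test'[OF geometric, where N = 0]) simp
    then have "(\<lambda>n. \<Sum>i<n. ys (Suc i) t - ys i t) \<longlonglongrightarrow> (\<Sum>i. ys (Suc i) t - ys i t)"
      by (intro summable_LIMSEQ) (rule summable_norm_cancel)
    then have "(\<lambda>n. (ys n t - ys 0 t) + ys 0 t) \<longlonglongrightarrow> (\<Sum>i. ys (Suc i) t - ys i t) + ys 0 t"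
      by (intro tendsto_add tendsto_const) (simp add: sum_lessThan_telescope[of "\<lambda>i. ys i t"])
    then show ?thesis unfolding convergent_def by auto
  qed
  define y where "y t = lim (\<lambda>n. ys n t)" for t
  have ylim: "(\<lambda>n. ys n t) \<longlonglongrightarrow> y t" if "a \<le> t" "t \<le> b" for t
    using conv[OF that] unfolding y_def by (simp add: convergent_LIMSEQ_iff)
  have tail: "holder_bound (\<lambda>r. ys (n + k) r - ys n r) a b \<gamma> (2 * D * (1/2) ^ n - 2 * D * (1/2) ^ (n + k))"
    for n k
  proof (induction k)
    case (Suc k)
    have "holder_bound (\<lambda>r. (ys (Suc (n + k)) r - ys (n + k) r) + (ys (n + k) r - ys n r)) a b \<gamma>
        (D * (1/2) ^ (n + k) + (2 * D * (1/2) ^ n - 2 * D * (1/2) ^ (n + k)))"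
      by (rule holder_bound_add[OF step Suc])
    then show ?case by (simp add: field_simps)
  qed (simp add: holder_bound_def)
  have "holder_bound (\<lambda>r. y r - ys n r) a b \<gamma> (2 * D * (1/2) ^ n)" for n
  proof (rule holder_bound_limit[where N = n])
    fix m assume "n \<le> m"
    then obtain k where "m = n + k" using le_iff_add by blast
    then show "holder_bound (\<lambda>r. ys m r - ys n r) a b \<gamma> (2 * D * (1/2) ^ n)"
      using holder_bound_mono[OF tail[of n k]] D by simp
  qed (use ylim in \<open>auto intro!: tendsto_intros\<close>)
  with ylim show ?thesis using that by blast
qed

definition holder_ball :: "'a::real_normed_vector \<Rightarrow> real \<Rightarrow> real \<Rightarrow> real \<Rightarrow> real \<Rightarrow> (real \<Rightarrow> 'a) set" where
  "holder_ball \<xi> a b \<gamma> M =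
     {y. y a = \<xi> \<and> (\<forall>t. a \<le> t \<and> t \<le> b \<longrightarrow> norm (y t - \<xi>) \<le> 1) \<and> holder_bound y a b \<gamma> M}"

lemma holder_contraction_fixpoint:
  fixes \<Phi> :: "(real \<Rightarrow> 'a::banach) \<Rightarrow> real \<Rightarrow> 'a"
  assumes ab: "a \<le> b" and M: "M \<ge> 0" and \<gamma>: "\<gamma> > 0"
    and into: "\<And>y. y \<in> holder_ball \<xi> a b \<gamma> M \<Longrightarrow> \<Phi> y \<in> holder_ball \<xi> a b \<gamma> M"
    and contr: "\<And>y z D. y \<in> holder_ball \<xi> a b \<gamma> M \<Longrightarrow> z \<in> holder_ball \<xi> a b \<gamma> M \<Longrightarrow> D \<ge> 0 \<Longrightarrow>
       holder_bound (\<lambda>r. y r - z r) a b \<gamma> D \<Longrightarrow> holder_bound (\<lambda>r. \<Phi> y r - \<Phi> z r) a b \<gamma> (D / 2)"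
  obtains y where "y \<in> holder_ball \<xi> a b \<gamma> M" "\<And>t. a \<le> t \<Longrightarrow> t \<le> b \<Longrightarrow> \<Phi> y t = y t"
proof -
  define ys where "ys n = (\<Phi> ^^ n) (\<lambda>_. \<xi>)" for n
  have ys_ball: "ys n \<in> holder_ball \<xi> a b \<gamma> M" for n
    by (induction n) (use M into in \<open>simp_all add: ys_def holder_ball_def holder_bound_def\<close>)
  have ys_Suc: "ys (Suc n) = \<Phi> (ys n)" for n unfolding ys_def by simp
  have ball: "y a = \<xi>" "\<And>t. a \<le> t \<Longrightarrow> t \<le> b \<Longrightarrow> norm (y t - \<xi>) \<le> 1" "holder_bound y a b \<gamma> M"
    if "y \<in> holder_ball \<xi> a b \<gamma> M" for y
    using that unfolding holder_ball_def by auto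
  have step: "holder_bound (\<lambda>r. ys (Suc n) r - ys n r) a b \<gamma> (2 * M * (1/2) ^ n)" for n
  proof (induction n)
    case 0
    show ?case using holder_bound_diff[OF ball(3)[OF ys_ball] ball(3)[OF ys_ball]] by simp
  next
    case (Suc n)
    show ?case using contr[OF ys_ball ys_ball _ Suc] M unfolding ys_Suc[symmetric] by simp
  qed
  obtain y where ylim: "\<And>t. a \<le> t \<Longrightarrow> t \<le> b \<Longrightarrow> (\<lambda>n. ys n t) \<longlonglongrightarrow> y t"
    and close: "\<And>n. holder_bound (\<lambda>r. y r - ys n r) a b \<gamma> (2 * (2 * M) * (1/2) ^ n)"
    using holder_bound_geometric_limit[of ys a \<xi> "2 * M" \<gamma> b] ball(1)[OF ys_ball] M \<gamma> step by auto
  have y_ball: "y \<in> holder_ball \<xi> a b \<gamma> M"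
  proof -
    have "y a = \<xi>" using ylim[of a] ab ball(1)[OF ys_ball] by (simp add: LIMSEQ_const_iff)
    moreover have "norm (y t - \<xi>) \<le> 1" if "a \<le> t" "t \<le> b" for t
      using tendsto_norm[OF tendsto_diff[OF ylim[OF that] tendsto_const[of \<xi>]]]
      by (rule tendsto_upperbound) (use ball(2)[OF ys_ball] that in auto)
    moreover have "holder_bound y a b \<gamma> M"
      by (rule holder_bound_limit[where N = 0, OF ylim]) (use ball(3)[OF ys_ball] in auto)
    ultimately show ?thesis unfolding holder_ball_def by auto
  qed
  have "\<Phi> y t = y t" if t: "a \<le> t" "t \<le> b" for t
  proof -
    have hb: "holder_bound (\<lambda>r. \<Phi> y r - ys (Suc n) r) a b \<gamma> (2 * M * (1/2) ^ n)" for n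
      using contr[OF y_ball ys_ball _ close, of n] M unfolding ys_Suc by (simp add: mult.assoc)
    have za: "\<Phi> y a - ys (Suc n) a = 0" for n
      using ball(1)[OF into[OF y_ball]] ball(1)[OF ys_ball] by simp
    have "norm (\<Phi> y t - ys (Suc n) t) \<le> 2 * M * (1/2) ^ n * (b - a) powr \<gamma>" for n
      using holder_bound_norm_le[OF hb za t less_imp_le[OF \<gamma>]] M by simp
    then have "\<forall>n. norm (\<Phi> y t - ys (Suc n) t) \<le> 2 * M * (b - a) powr \<gamma> * (1/2) ^ n"
      by (simp add: mult_ac)
    moreover have "(\<lambda>n. 2 * M * (b - a) powr \<gamma> * (1/2::real) ^ n) \<longlonglongrightarrow> 0"
      using tendsto_mult_right_zero[OF LIMSEQ_power_zero[of "1/2::real"]] by simp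
    ultimately have "(\<lambda>n. \<Phi> y t - ys (Suc n) t) \<longlonglongrightarrow> 0"
      by (rule Lim_null_comparison[OF always_eventually])
    moreover have "(\<lambda>n. \<Phi> y t - ys (Suc n) t) \<longlonglongrightarrow> \<Phi> y t - y t"
      using ylim[OF t] by (intro tendsto_intros) (rule LIMSEQ_Suc)
    ultimately show ?thesis using LIMSEQ_unique by force
  qed
  with y_ball show ?thesis using that by blast
qed

section \<open>Local bounds for the driving field\<close>

definition local_holder_bounds ::
  "real \<Rightarrow> real \<Rightarrow> real \<Rightarrow> (real \<Rightarrow> 'a::real_normed_vector \<Rightarrow> 'b::real_normed_vector) \<Rightarrow> real \<Rightarrow> real \<Rightarrow> bool"
  where
  "local_holder_bounds T \<alpha> \<beta> F R C \<longleftrightarrow> (\<forall>s t. 0 \<le> s \<and> s \<le> t \<and> t \<le> T \<longrightarrow>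
     (\<forall>x. norm x \<le> R \<longrightarrow> norm (F t x - F s x) \<le> C * (t - s) powr \<alpha>) \<and>
     (\<forall>x y. norm x \<le> R \<and> norm y \<le> R \<longrightarrow>
        norm ((F t x - F s x) - (F t y - F s y)) \<le> C * (t - s) powr \<alpha> * norm (x - y) powr \<beta>))"

lemma local_holder_bounds_mono:
  assumes "local_holder_bounds T \<alpha> \<beta> F R C" "R' \<le> R" "C \<le> C'"
  shows "local_holder_bounds T \<alpha> \<beta> F R' C'"
  unfolding local_holder_bounds_def
proof (intro allI impI conjI)
  fix s t :: real and x y :: 'a assume st: "0 \<le> s \<and> s \<le> t \<and> t \<le> T"
  have "C * (t - s) powr \<alpha> \<le> C' * (t - s) powr \<alpha>" "C * (t - s) powr \<alpha> * norm (x - y) powr \<beta> \<le>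
      C' * (t - s) powr \<alpha> * norm (x - y) powr \<beta>"
    using assms(3) by (auto intro!: mult_right_mono)
  moreover note bounds = assms(1)[unfolded local_holder_bounds_def, rule_format, OF st]
  ultimately show "norm x \<le> R' \<Longrightarrow> norm (F t x - F s x) \<le> C' * (t - s) powr \<alpha>"
    and "norm x \<le> R' \<and> norm y \<le> R' \<Longrightarrow>
      norm ((F t x - F s x) - (F t y - F s y)) \<le> C' * (t - s) powr \<alpha> * norm (x - y) powr \<beta>"
    using assms(2) by (meson order_trans)+
qed

text \<open>The class \<open>loc_holder_field\<close> only constrains \<open>s < t\<close> and \<open>x \<noteq> y\<close>; the excluded cases
  are trivial because \<open>0 powr \<alpha> = 0\<close>.\<close>

lemma loc_holder_field_bounds:
  assumes "loc_holder_field T \<alpha> \<beta> F"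
  obtains C where "C > 0" "local_holder_bounds T \<alpha> \<beta> F R C"
proof -
  have "0 < max R (1::real)" by simp
  from assms[unfolded loc_holder_field_def, rule_format, OF this]
  obtain C0 where C0: "\<forall>s t. 0 \<le> s \<and> s < t \<and> t \<le> T \<longrightarrow>
        (\<forall>x. norm x \<le> max R 1 \<longrightarrow> norm (F t x - F s x) \<le> C0 * (t - s) powr \<alpha>) \<and>
        (\<forall>x y. norm x \<le> max R 1 \<and> norm y \<le> max R 1 \<and> x \<noteq> y \<longrightarrow>
           norm ((F t x - F s x) - (F t y - F s y)) \<le> C0 * (t - s) powr \<alpha> * norm (x - y) powr \<beta>)"
    by (rule exE)
  have "local_holder_bounds T \<alpha> \<beta> F (max R 1) C0"
    unfolding local_holder_bounds_def
  proof (intro allI impI conjI)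
    fix s t :: real and x y :: 'a assume st: "0 \<le> s \<and> s \<le> t \<and> t \<le> T"
    show "norm (F t x - F s x) \<le> C0 * (t - s) powr \<alpha>" if "norm x \<le> max R 1"
    proof (cases "s = t")
      case False
      then show ?thesis using C0[rule_format, of s t] st that by auto
    qed simp
    show "norm ((F t x - F s x) - (F t y - F s y)) \<le> C0 * (t - s) powr \<alpha> * norm (x - y) powr \<beta>"
      if "norm x \<le> max R 1 \<and> norm y \<le> max R 1"
    proof (cases "s = t \<or> x = y")
      case False
      then show ?thesis using C0[rule_format, of s t] st that by auto
    qed auto
  qed
  then have "local_holder_bounds T \<alpha> \<beta> F R (max C0 1)"
    by (rule local_holder_bounds_mono) auto
  then show ?thesis by (rule that[rotated]) simp
qed

locale young_field =
  fixes T \<alpha> \<beta> :: real and A :: "real \<Rightarrow> 'v::banach \<Rightarrow> 'v" and DA :: "real \<Rightarrow> 'v \<Rightarrow> ('v \<Rightarrow>\<^sub>L 'v)"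
  assumes T_pos: "T > 0" and \<alpha>: "0 < \<alpha>" "\<alpha> < 1" and \<beta>: "0 < \<beta>" "\<beta> < 1" and \<alpha>\<beta>: "\<alpha> * (1 + \<beta>) > 1"
    and A_holder: "loc_holder_field T \<alpha> \<beta> A"
    and A_deriv: "\<And>t x. t \<in> {0..T} \<Longrightarrow> (A t has_derivative blinfun_apply (DA t x)) (at x)"
    and DA_holder: "loc_holder_field T \<alpha> \<beta> DA"
begin

definition field_bounds :: "real \<Rightarrow> real \<Rightarrow> bool" where
  "field_bounds R C \<longleftrightarrow> C > 0 \<and> local_holder_bounds T \<alpha> \<beta> A R C \<and> local_holder_bounds T \<alpha> \<beta> DA R C"

lemma field_bounds_exist: obtains C where "field_bounds R C"
proof -
  obtain C1 C2 where "C1 > 0" "local_holder_bounds T \<alpha> \<beta> A R C1" "local_holder_bounds T \<alpha> \<beta> DA R C2"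
    using loc_holder_field_bounds[OF A_holder] loc_holder_field_bounds[OF DA_holder] by metis
  then have "field_bounds R (max C1 C2)"
    unfolding field_bounds_def by (auto intro: local_holder_bounds_mono)
  then show ?thesis using that by blast
qed

lemma field_bounds_pos: "field_bounds R C \<Longrightarrow> C > 0"
  unfolding field_bounds_def by simp

lemma field_bounds_radius_mono: "field_bounds R C \<Longrightarrow> R' \<le> R \<Longrightarrow> field_bounds R' C"
  unfolding field_bounds_def by (auto intro: local_holder_bounds_mono)

lemma field_bounds_increment:
  "field_bounds R C \<Longrightarrow> 0 \<le> s \<Longrightarrow> s \<le> t \<Longrightarrow> t \<le> T \<Longrightarrow> norm x \<le> R \<Longrightarrow>
   norm (A t x - A s x) \<le> C * (t - s) powr \<alpha>"
  unfolding field_bounds_def local_holder_bounds_def by blast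

lemma field_bounds_holder:
  "field_bounds R C \<Longrightarrow> 0 \<le> s \<Longrightarrow> s \<le> t \<Longrightarrow> t \<le> T \<Longrightarrow> norm x \<le> R \<Longrightarrow> norm y \<le> R \<Longrightarrow>
   norm ((A t x - A s x) - (A t y - A s y)) \<le> C * (t - s) powr \<alpha> * norm (x - y) powr \<beta>"
  unfolding field_bounds_def local_holder_bounds_def by blast

lemma field_bounds_deriv_increment:
  "field_bounds R C \<Longrightarrow> 0 \<le> s \<Longrightarrow> s \<le> t \<Longrightarrow> t \<le> T \<Longrightarrow> norm x \<le> R \<Longrightarrow>
   norm (DA t x - DA s x) \<le> C * (t - s) powr \<alpha>"
  unfolding field_bounds_def local_holder_bounds_def by blast

lemma field_bounds_deriv_holder:
  "field_bounds R C \<Longrightarrow> 0 \<le> s \<Longrightarrow> s \<le> t \<Longrightarrow> t \<le> T \<Longrightarrow> norm x \<le> R \<Longrightarrow> norm y \<le> R \<Longrightarrow>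
   norm ((DA t x - DA s x) - (DA t y - DA s y)) \<le> C * (t - s) powr \<alpha> * norm (x - y) powr \<beta>"
  unfolding field_bounds_def local_holder_bounds_def by blast

lemma increment_has_derivative:
  assumes "0 \<le> s" "s \<le> t" "t \<le> T"
  shows "((\<lambda>z. A t z - A s z) has_derivative blinfun_apply (DA t x - DA s x)) (at x)"
  using has_derivative_diff[OF A_deriv A_deriv] assms
  unfolding minus_blinfun.rep_eq fun_diff_def by simp

lemma field_bounds_lipschitz:
  assumes C: "field_bounds R C" and st: "0 \<le> s" "s \<le> t" "t \<le> T" and xy: "norm x \<le> R" "norm y \<le> R"
  shows "norm ((A t x - A s x) - (A t y - A s y)) \<le> C * (t - s) powr \<alpha> * norm (x - y)"
proof (rule differentiable_bound[OF convex_cball])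
  fix z :: 'v assume "z \<in> cball 0 R"
  then show "onorm (blinfun_apply (DA t z - DA s z)) \<le> C * (t - s) powr \<alpha>"
    using field_bounds_deriv_increment[OF C st, of z] unfolding norm_blinfun.rep_eq[symmetric] by simp
qed (use increment_has_derivative[OF st] xy in \<open>auto intro: has_derivative_at_withinI\<close>)

text \<open>The second-order difference is handled through the derivative: with \<open>f = A t - A s\<close> and
  \<open>a = x1 - x2\<close>, the map \<open>z \<mapsto> f (z + a) - f z\<close> is Lipschitz with constant of order
  \<open>norm a powr \<beta>\<close> by the Hoelder continuity of \<open>DA\<close>.\<close>

lemma field_bounds_second_difference:
  assumes C: "field_bounds R3 C" and R3: "3 * R \<le> R3" and st: "0 \<le> s" "s \<le> t" "t \<le> T"
    and n: "norm x1 \<le> R" "norm x2 \<le> R" "norm y1 \<le> R" "norm y2 \<le> R"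
  shows "norm ((A t x1 - A s x1) - (A t x2 - A s x2) - ((A t y1 - A s y1) - (A t y2 - A s y2)))
     \<le> C * (t - s) powr \<alpha> * (norm ((x1 - x2) - (y1 - y2)) + norm (x1 - x2) powr \<beta> * norm (x2 - y2))"
proof -
  define f where "f z = A t z - A s z" for z
  define a where "a = x1 - x2"
  define g where "g z = f (z + a) - f z" for z
  have R0: "R \<ge> 0" using n(1) norm_ge_zero order_trans by blast
  have na: "norm a \<le> 2 * R" unfolding a_def using norm_triangle_ineq4[of x1 x2] n by simp
  have f_deriv: "(f has_derivative blinfun_apply (DA t z - DA s z)) (at z)" for z
    unfolding f_def by (rule increment_has_derivative[OF st])
  have g_deriv: "(g has_derivative blinfun_apply ((DA t (z + a) - DA s (z + a)) - (DA t z - DA s z)))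
      (at z within cball 0 R)" for z
  proof -
    have "((\<lambda>z. f (z + a)) has_derivative blinfun_apply (DA t (z + a) - DA s (z + a))) (at z)"
      using has_derivative_compose[OF has_derivative_add_const[OF has_derivative_ident] f_deriv[of "z + a"]]
      by simp
    from has_derivative_diff[OF this f_deriv[of z]] show ?thesis
      unfolding g_def blinfun.diff_left[symmetric] by (rule has_derivative_at_withinI)
  qed
  have g_bound: "onorm (blinfun_apply ((DA t (z + a) - DA s (z + a)) - (DA t z - DA s z)))
      \<le> C * (t - s) powr \<alpha> * norm a powr \<beta>" if "z \<in> cball 0 R" for z
  proof -
    have "norm (z + a) \<le> R3" "norm z \<le> R3"
      using that na norm_triangle_ineq[of z a] R3 R0 by auto
    from field_bounds_deriv_holder[OF C st this] show ?thesis
      unfolding norm_blinfun.rep_eq[symmetric] by simp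
  qed
  have G: "norm (g x2 - g y2) \<le> C * (t - s) powr \<alpha> * norm a powr \<beta> * norm (x2 - y2)"
    by (rule differentiable_bound[OF convex_cball g_deriv g_bound]) (use n in auto)
  have "norm (y2 + a) \<le> R3" "norm y1 \<le> R3"
    using na norm_triangle_ineq[of y2 a] n R3 R0 by auto
  moreover have "y2 + a - y1 = (x1 - x2) - (y1 - y2)" unfolding a_def by (simp add: algebra_simps)
  ultimately have L: "norm (f (y2 + a) - f y1) \<le> C * (t - s) powr \<alpha> * norm ((x1 - x2) - (y1 - y2))"
    using field_bounds_lipschitz[OF C st] unfolding f_def by metis
  have "(A t x1 - A s x1) - (A t x2 - A s x2) - ((A t y1 - A s y1) - (A t y2 - A s y2))
      = (g x2 - g y2) + (f (y2 + a) - f y1)"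
    unfolding g_def f_def a_def by (simp add: algebra_simps)
  then have "norm ((A t x1 - A s x1) - (A t x2 - A s x2) - ((A t y1 - A s y1) - (A t y2 - A s y2)))
      \<le> norm (g x2 - g y2) + norm (f (y2 + a) - f y1)"
    by (simp only: norm_triangle_ineq)
  also have "\<dots> \<le> C * (t - s) powr \<alpha> * norm a powr \<beta> * norm (x2 - y2)
      + C * (t - s) powr \<alpha> * norm ((x1 - x2) - (y1 - y2))"
    using G L by linarith
  finally show ?thesis unfolding a_def by (simp add: algebra_simps)
qed

end

section \<open>The nonlinear Young integral along Hoelder paths\<close>

context young_field
begin

abbreviation \<theta> :: real where "\<theta> \<equiv> \<alpha> + \<beta> * \<alpha>"

lemma \<theta>_gt_1: "\<theta> > 1"
  using \<alpha>\<beta> by (simp add: algebra_simps)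

definition admissible_path :: "(real \<Rightarrow> 'v) \<Rightarrow> real \<Rightarrow> real \<Rightarrow> real \<Rightarrow> real \<Rightarrow> real \<Rightarrow> bool" where
  "admissible_path x a b R \<gamma> M \<longleftrightarrow> 0 \<le> a \<and> b \<le> T \<and> (\<forall>r. a \<le> r \<and> r \<le> b \<longrightarrow> norm (x r) \<le> R) \<and>
     0 < \<gamma> \<and> \<alpha> + \<beta> * \<gamma> > 1 \<and> M \<ge> 0 \<and> holder_bound x a b \<gamma> M"

lemma admissible_pathD:
  assumes "admissible_path x a b R \<gamma> M"
  shows "0 \<le> a" "b \<le> T" "\<And>r. a \<le> r \<Longrightarrow> r \<le> b \<Longrightarrow> norm (x r) \<le> R" "0 < \<gamma>" "\<alpha> + \<beta> * \<gamma> > 1"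
    "M \<ge> 0" "holder_bound x a b \<gamma> M"
  using assms unfolding admissible_path_def by auto

lemma admissible_path_subinterval:
  "admissible_path x a b R \<gamma> M \<Longrightarrow> a \<le> a' \<Longrightarrow> b' \<le> b \<Longrightarrow> admissible_path x a' b' R \<gamma> M"
  unfolding admissible_path_def by (auto intro: holder_bound_subinterval)

lemma admissible_path_mono:
  "admissible_path x a b R \<gamma> M \<Longrightarrow> R \<le> R' \<Longrightarrow> M \<le> M' \<Longrightarrow> admissible_path x a b R' \<gamma> M'"
  unfolding admissible_path_def by (auto intro: holder_bound_mono)

lemma young_germ_defect:
  "young_germ A x s t - young_germ A x s u - young_germ A x u t =
     (A t (x s) - A u (x s)) - (A t (x u) - A u (x u))"
  unfolding young_germ_def by (simp add: algebra_simps)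

lemma young_germ_defect_bound:
  assumes C: "field_bounds R C" and x: "admissible_path x a b R \<gamma> M"
    and su: "a \<le> s" "s \<le> u" "u \<le> t" "t \<le> b"
  shows "norm (young_germ A x s t - young_germ A x s u - young_germ A x u t)
    \<le> C * M powr \<beta> * (t - s) powr (\<alpha> + \<beta> * \<gamma>)"
proof -
  note x = admissible_pathD[OF x]
  have "norm (young_germ A x s t - young_germ A x s u - young_germ A x u t)
      \<le> C * (t - u) powr \<alpha> * norm (x s - x u) powr \<beta>"
    unfolding young_germ_defect using field_bounds_holder[OF C _ su(3)] x su by auto
  also have "norm (x s - x u) powr \<beta> \<le> (M * (u - s) powr \<gamma>) powr \<beta>"
    using holder_boundD[OF x(7) su(1,2)] su \<beta> by (intro powr_mono2) (auto simp: norm_minus_commute)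
  also have "(M * (u - s) powr \<gamma>) powr \<beta> = M powr \<beta> * (u - s) powr (\<beta> * \<gamma>)"
    using x su by (simp add: powr_mult powr_powr mult.commute)
  also have "C * (t - u) powr \<alpha> * (M powr \<beta> * (u - s) powr (\<beta> * \<gamma>))
      = C * M powr \<beta> * ((t - u) powr \<alpha> * (u - s) powr (\<beta> * \<gamma>))"
    by (simp add: mult_ac)
  also have "\<dots> \<le> C * M powr \<beta> * (t - s) powr (\<alpha> + \<beta> * \<gamma>)"
    using powr_split_le[of s u t \<alpha> "\<beta> * \<gamma>"] su \<alpha> \<beta> x field_bounds_pos[OF C]
    by (intro mult_left_mono) auto
  finally show ?thesis using field_bounds_pos[OF C] by (simp add: mult_left_mono)
qed

definition young_integral :: "(real \<Rightarrow> 'v) \<Rightarrow> real \<Rightarrow> real \<Rightarrow> 'v" where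
  "young_integral x s t = (THE I. germ_has_integral (young_germ A x) s t I)"

lemma young_integral_eq:
  "s \<le> t \<Longrightarrow> germ_has_integral (young_germ A x) s t I \<Longrightarrow> young_integral x s t = I"
  unfolding young_integral_def by (rule the_equality) (auto intro: germ_integral_unique)

lemma young_integral_trivial: "young_integral x s s = 0"
  by (rule young_integral_eq[OF order.refl germ_has_integral_trivial])

lemma young_integral_exists:
  assumes C: "field_bounds R C" and x: "admissible_path x a b R \<gamma> M"
    and st: "a \<le> s" "s \<le> t" "t \<le> b"
  shows "germ_has_integral (young_germ A x) s t (young_integral x s t)"
    and "norm (young_integral x s t - young_germ A x s t)
      \<le> sewing_const (\<alpha> + \<beta> * \<gamma>) * (C * M powr \<beta>) * (t - s) powr (\<alpha> + \<beta> * \<gamma>)"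
proof -
  have "C * M powr \<beta> \<ge> 0" using field_bounds_pos[OF C] by simp
  then obtain I where I: "germ_has_integral (young_germ A x) s t I"
      "norm (I - young_germ A x s t) \<le> sewing_const (\<alpha> + \<beta> * \<gamma>) * (C * M powr \<beta>) * (t - s) powr (\<alpha> + \<beta> * \<gamma>)"
    using sewing_lemma[OF admissible_pathD(5)[OF x] _ young_germ_defect_bound[OF C x] st] by blast
  moreover have "young_integral x s t = I" using young_integral_eq[OF st(2) I(1)] .
  ultimately show "germ_has_integral (young_germ A x) s t (young_integral x s t)"
    and "norm (young_integral x s t - young_germ A x s t)
      \<le> sewing_const (\<alpha> + \<beta> * \<gamma>) * (C * M powr \<beta>) * (t - s) powr (\<alpha> + \<beta> * \<gamma>)"
    by simp_all
qed

lemma young_integral_additive: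
  assumes "admissible_path x a b R \<gamma> M" "a \<le> s" "s \<le> u" "u \<le> t" "t \<le> b"
  shows "young_integral x s t = young_integral x s u + young_integral x u t"
proof -
  obtain C where C: "field_bounds R C" using field_bounds_exist by blast
  show ?thesis
    using young_integral_exists(1)[OF C assms(1)] germ_integral_additive[OF assms(3,4)] assms(2-5)
    by (meson order_trans)
qed

lemma young_integral_norm_le:
  assumes C: "field_bounds R C" and x: "admissible_path x a b R \<gamma> M"
    and st: "a \<le> s" "s \<le> t" "t \<le> b"
  shows "norm (young_integral x s t)
    \<le> C * (t - s) powr \<alpha> + sewing_const (\<alpha> + \<beta> * \<gamma>) * (C * M powr \<beta>) * (t - s) powr (\<alpha> + \<beta> * \<gamma>)"
proof -
  have "norm (young_germ A x s t) \<le> C * (t - s) powr \<alpha>"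
    unfolding young_germ_def
    using field_bounds_increment[OF C _ st(2)] admissible_pathD[OF x] st by (meson order_trans)
  then show ?thesis
    using young_integral_exists(2)[OF C x st] norm_triangle_ineq[of "young_integral x s t - young_germ A x s t"
      "young_germ A x s t"] by simp
qed

lemma young_integral_holder:
  assumes C: "field_bounds R C" and x: "admissible_path x a b R \<gamma> M"
  shows "holder_bound (young_integral x a) a b \<alpha>
    (C + sewing_const (\<alpha> + \<beta> * \<gamma>) * (C * M powr \<beta>) * (b - a) powr (\<beta> * \<gamma>))"
  unfolding holder_bound_def
proof (intro allI impI)
  fix u v assume uv: "a \<le> u" "u \<le> v" "v \<le> b"
  note x' = admissible_pathD[OF x]
  have K: "sewing_const (\<alpha> + \<beta> * \<gamma>) * (C * M powr \<beta>) \<ge> 0"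
    using sewing_const_pos[OF x'(5)] field_bounds_pos[OF C] by simp
  have "(v - u) powr (\<alpha> + \<beta> * \<gamma>) = (v - u) powr \<alpha> * (v - u) powr (\<beta> * \<gamma>)" by (simp add: powr_add)
  also have "\<dots> \<le> (v - u) powr \<alpha> * (b - a) powr (\<beta> * \<gamma>)"
    using uv \<beta> x' by (intro mult_left_mono powr_mono2) auto
  finally have "norm (young_integral x u v) \<le> C * (v - u) powr \<alpha>
      + sewing_const (\<alpha> + \<beta> * \<gamma>) * (C * M powr \<beta>) * ((v - u) powr \<alpha> * (b - a) powr (\<beta> * \<gamma>))"
    using young_integral_norm_le[OF C x uv] mult_left_mono[OF _ K] by fastforce
  moreover have "young_integral x a v - young_integral x a u = young_integral x u v"
    using young_integral_additive[OF x order.refl uv] by simp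
  ultimately show "norm (young_integral x a v - young_integral x a u)
      \<le> (C + sewing_const (\<alpha> + \<beta> * \<gamma>) * (C * M powr \<beta>) * (b - a) powr (\<beta> * \<gamma>)) * (v - u) powr \<alpha>"
    by (simp add: algebra_simps)
qed

end

section \<open>Contraction estimate and local existence\<close>

context young_field
begin

lemma difference_germ_defect_bound:
  assumes C: "field_bounds (3 * R) C" and h: "b - a \<le> h" "h \<le> 1"
    and x: "admissible_path x a b R \<alpha> M" and y: "admissible_path y a b R \<alpha> M"
    and xy_a: "x a = y a" and xy: "holder_bound (\<lambda>r. x r - y r) a b \<alpha> D" and D: "D \<ge> 0"
    and su: "a \<le> s" "s \<le> u" "u \<le> t" "t \<le> b"
  shows "norm ((young_germ A x s t - young_germ A y s t) - (young_germ A x s u - young_germ A y s u)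
      - (young_germ A x u t - young_germ A y u t))
    \<le> C * D * (h powr (\<alpha> - \<beta> * \<alpha>) + M powr \<beta> * h powr \<alpha>) * (t - s) powr \<theta>"
proof -
  define G where "G p q = young_germ A x p q - young_germ A y p q" for p q
  note x' = admissible_pathD[OF x] and y' = admissible_pathD[OF y]
  have C0: "C > 0" using field_bounds_pos[OF C] .
  have "\<alpha> - \<beta> * \<alpha> \<ge> 0" using \<alpha> \<beta> by (simp add: mult_le_cancel_right1 less_imp_le)
  have diff_sup: "norm (x r - y r) \<le> D * h powr \<alpha>" if "a \<le> r" "r \<le> b" for r
  proof -
    have "norm (x r - y r) \<le> D * (b - a) powr \<alpha>" using holder_bound_norm_le[OF xy _ that] xy_a \<alpha> D by simp
    also have "\<dots> \<le> D * h powr \<alpha>" using h that D \<alpha> by (intro mult_left_mono powr_mono2) auto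
    finally show ?thesis .
  qed
  define n1 n2 n3 where "n1 = norm ((x s - x u) - (y s - y u))" and "n2 = norm (x s - x u) powr \<beta>"
    and "n3 = norm (x u - y u)"
  have "G s t - G s u - G u t = (A t (x s) - A u (x s)) - (A t (x u) - A u (x u)) -
      ((A t (y s) - A u (y s)) - (A t (y u) - A u (y u)))"
    unfolding G_def young_germ_def by (simp add: algebra_simps)
  then have "norm (G s t - G s u - G u t) \<le> C * (t - u) powr \<alpha> * (n1 + n2 * n3)"
    unfolding n1_def n2_def n3_def
    using field_bounds_second_difference[OF C order.refl] x' y' su by auto
  also have "\<dots> \<le> C * (t - u) powr \<alpha> * (D * (u - s) powr \<alpha> + M powr \<beta> * (u - s) powr (\<beta> * \<alpha>) * (D * h powr \<alpha>))"
  proof -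
    have "n1 \<le> D * (u - s) powr \<alpha>"
      using holder_boundD[OF xy su(1,2)] su unfolding n1_def by (simp add: norm_minus_commute algebra_simps)
    moreover have "n2 \<le> (M * (u - s) powr \<alpha>) powr \<beta>"
      using holder_boundD[OF x'(7) su(1,2)] su \<beta> unfolding n2_def
      by (intro powr_mono2) (auto simp: norm_minus_commute)
    moreover have "(M * (u - s) powr \<alpha>) powr \<beta> = M powr \<beta> * (u - s) powr (\<beta> * \<alpha>)"
      using x' su by (simp add: powr_mult powr_powr mult.commute)
    moreover have "n3 \<le> D * h powr \<alpha>" "n3 \<ge> 0" unfolding n3_def using diff_sup su by simp_all
    ultimately show ?thesis using C0 unfolding n2_def
      by (intro mult_left_mono add_mono mult_mono) auto
  qed
  also have "\<dots> = C * D * ((t - u) powr \<alpha> * (u - s) powr \<alpha>)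
      + C * D * M powr \<beta> * h powr \<alpha> * ((t - u) powr \<alpha> * (u - s) powr (\<beta> * \<alpha>))"
    by (simp add: algebra_simps)
  also have "\<dots> \<le> C * D * ((t - s) powr \<theta> * h powr (\<alpha> - \<beta> * \<alpha>))
      + C * D * M powr \<beta> * h powr \<alpha> * (t - s) powr \<theta>"
  proof (intro add_mono mult_left_mono)
    have "(t - u) powr \<alpha> * (u - s) powr \<alpha> \<le> (t - s) powr (\<theta> + (\<alpha> - \<beta> * \<alpha>))"
      using powr_split_le[of s u t \<alpha> \<alpha>] su \<alpha> by simp
    also have "\<dots> = (t - s) powr \<theta> * (t - s) powr (\<alpha> - \<beta> * \<alpha>)" by (rule powr_add)
    also have "\<dots> \<le> (t - s) powr \<theta> * h powr (\<alpha> - \<beta> * \<alpha>)"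
      using su h \<open>\<alpha> - \<beta> * \<alpha> \<ge> 0\<close> by (intro mult_left_mono powr_mono2) auto
    finally show "(t - u) powr \<alpha> * (u - s) powr \<alpha> \<le> (t - s) powr \<theta> * h powr (\<alpha> - \<beta> * \<alpha>)" .
    show "(t - u) powr \<alpha> * (u - s) powr (\<beta> * \<alpha>) \<le> (t - s) powr \<theta>"
      using powr_split_le[of s u t \<alpha> "\<beta> * \<alpha>"] su \<alpha> \<beta> by simp
  qed (use C0 D in auto)
  finally show ?thesis unfolding G_def by (simp add: algebra_simps)
qed

lemma young_integral_difference_bound:
  assumes C: "field_bounds (3 * R) C" and h: "b - a \<le> h" "h \<le> 1"
    and x: "admissible_path x a b R \<alpha> M" and y: "admissible_path y a b R \<alpha> M"
    and xy_a: "x a = y a" and xy: "holder_bound (\<lambda>r. x r - y r) a b \<alpha> D" and D: "D \<ge> 0"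
    and st: "a \<le> s" "s \<le> t" "t \<le> b"
  shows "norm (young_integral x s t - young_integral y s t)
    \<le> C * (1 + sewing_const \<theta> * (1 + M powr \<beta>)) * h powr \<alpha> * D * (t - s) powr \<alpha>"
proof -
  define G where "G = (\<lambda>p q. young_germ A x p q - young_germ A y p q)"
  define K where "K = C * D * (h powr (\<alpha> - \<beta> * \<alpha>) + M powr \<beta> * h powr \<alpha>)"
  note x' = admissible_pathD[OF x] and y' = admissible_pathD[OF y]
  have C0: "C > 0" using field_bounds_pos[OF C] .
  have "0 \<le> R" using x'(3)[of a] st by (meson norm_ge_zero order_trans order.refl)
  then have CR: "field_bounds R C" using field_bounds_radius_mono[OF C] by simp
  have K0: "K \<ge> 0" unfolding K_def using C0 D by simp
  have "germ_has_integral G s t (young_integral x s t - young_integral y s t)"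
    unfolding G_def
    by (rule germ_has_integral_diff[OF young_integral_exists(1)[OF CR x st] young_integral_exists(1)[OF CR y st]])
  moreover have "norm (G s' t' - G s' u - G u t') \<le> K * (t' - s') powr \<theta>"
    if "a \<le> s'" "s' \<le> u" "u \<le> t'" "t' \<le> b" for s' u t'
    using difference_germ_defect_bound[OF C h x y xy_a xy D that] unfolding G_def K_def .
  ultimately have close: "norm ((young_integral x s t - young_integral y s t) - G s t)
      \<le> sewing_const \<theta> * K * (t - s) powr \<theta>"
    using germ_has_integral_bound[OF st(2)] partition_sum_sewing_bound[OF \<theta>_gt_1 K0 _ _ st(1,3)]
    by blast
  have "norm (G s t) \<le> C * (t - s) powr \<alpha> * norm (x s - y s)"
    unfolding G_def young_germ_def using field_bounds_lipschitz[OF CR _ st(2)] x' y' st by auto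
  also have "norm (x s - y s) \<le> D * h powr \<alpha>"
    using holder_bound_norm_le[OF xy _ st(1) order_trans[OF st(2,3)]] xy_a \<alpha> D h st
      mult_left_mono[OF powr_mono2[of \<alpha> "b - a" h]] by fastforce
  finally have germ: "norm (G s t) \<le> C * (t - s) powr \<alpha> * (D * h powr \<alpha>)"
    using C0 by (simp add: mult_left_mono)
  have "K * (t - s) powr \<theta> \<le> C * D * (h powr \<alpha> + M powr \<beta> * h powr \<alpha>) * (t - s) powr \<alpha>"
  proof -
    have "(t - s) powr \<theta> = (t - s) powr \<alpha> * (t - s) powr (\<beta> * \<alpha>)" by (simp add: powr_add)
    also have "\<dots> \<le> (t - s) powr \<alpha> * h powr (\<beta> * \<alpha>)"
      using st h x'(1,2) \<alpha> \<beta> by (intro mult_left_mono powr_mono2) auto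
    finally have "K * (t - s) powr \<theta> \<le> K * h powr (\<beta> * \<alpha>) * (t - s) powr \<alpha>"
      using K0 by (simp add: mult_left_mono mult_ac)
    also have "K * h powr (\<beta> * \<alpha>) = C * D * (h powr \<alpha> + M powr \<beta> * h powr \<alpha> * h powr (\<beta> * \<alpha>))"
      unfolding K_def by (simp add: algebra_simps powr_add[symmetric])
    also have "\<dots> \<le> C * D * (h powr \<alpha> + M powr \<beta> * h powr \<alpha>)"
      using h st x'(1,2) \<alpha> \<beta> C0 D powr_le1[of "\<beta> * \<alpha>" h]
      by (intro mult_left_mono add_left_mono mult_right_le_one_le) auto
    finally show ?thesis using \<alpha> by (simp add: mult_right_mono)
  qed
  have "norm (young_integral x s t - young_integral y s t)
      \<le> norm ((young_integral x s t - young_integral y s t) - G s t) + norm (G s t)"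
    using norm_triangle_ineq[of "(young_integral x s t - young_integral y s t) - G s t" "G s t"] by simp
  also have "\<dots> \<le> sewing_const \<theta> * (C * D * (h powr \<alpha> + M powr \<beta> * h powr \<alpha>) * (t - s) powr \<alpha>)
      + C * (t - s) powr \<alpha> * (D * h powr \<alpha>)"
    using close germ \<open>K * (t - s) powr \<theta> \<le> _\<close> sewing_const_pos[OF \<theta>_gt_1]
    by (smt (verit, best) mult_left_mono mult.assoc)
  also have "\<dots> = C * (1 + sewing_const \<theta> * (1 + M powr \<beta>)) * h powr \<alpha> * D * (t - s) powr \<alpha>"
    by (simp add: algebra_simps)
  finally show ?thesis .
qed

end

context young_field
begin

definition young_solution :: "(real \<Rightarrow> 'v) \<Rightarrow> 'v \<Rightarrow> real \<Rightarrow> real \<Rightarrow> real \<Rightarrow> real \<Rightarrow> bool" where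
  "young_solution x \<xi> a b R M \<longleftrightarrow> a \<le> b \<and> admissible_path x a b R \<alpha> M \<and> x a = \<xi> \<and>
     (\<forall>t. a \<le> t \<and> t \<le> b \<longrightarrow> germ_has_integral (young_germ A x) a t (x t - \<xi>))"

lemma young_solutionD:
  assumes "young_solution x \<xi> a b R M"
  shows "a \<le> b" "admissible_path x a b R \<alpha> M" "x a = \<xi>"
    "\<And>t. a \<le> t \<Longrightarrow> t \<le> b \<Longrightarrow> germ_has_integral (young_germ A x) a t (x t - \<xi>)"
  using assms unfolding young_solution_def by auto

lemma young_solution_mono:
  "young_solution x \<xi> a b R M \<Longrightarrow> R \<le> R' \<Longrightarrow> M \<le> M' \<Longrightarrow> young_solution x \<xi> a b R' M'"
  unfolding young_solution_def using admissible_path_mono by blast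

lemma young_solution_increment:
  assumes x: "young_solution x \<xi> a b R M" and uv: "a \<le> u" "u \<le> v" "v \<le> b"
  shows "x v - x u = young_integral x u v"
proof -
  note x = young_solutionD[OF x]
  have "x t = \<xi> + young_integral x a t" if "a \<le> t" "t \<le> b" for t
    using young_integral_eq[OF that(1) x(4)[OF that]] by simp
  then show ?thesis
    using young_integral_additive[OF x(2) order.refl, of u v] uv by (simp add: algebra_simps)
qed

lemma holder_ball_admissible:
  assumes y: "y \<in> holder_ball \<xi> a b \<alpha> M" and ab: "0 \<le> a" "b \<le> T" and M: "M \<ge> 0"
    and R: "norm \<xi> + 1 \<le> R"
  shows "admissible_path y a b R \<alpha> M"
proof -
  have "norm (y t) \<le> R" if "a \<le> t" "t \<le> b" for t
    using y that norm_triangle_ineq[of "y t - \<xi>" \<xi>] R unfolding holder_ball_def by auto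
  then show ?thesis using y ab M \<alpha> \<theta>_gt_1 unfolding admissible_path_def holder_ball_def by auto
qed

lemma picard_step_into_ball:
  assumes C: "field_bounds R C" and y: "y \<in> holder_ball \<xi> a b \<alpha> (2 * C)"
    and ab: "0 \<le> a" "a \<le> b" "b \<le> T" and R: "norm \<xi> + 1 \<le> R"
    and small: "sewing_const \<theta> * (2 * C) powr \<beta> * (b - a) powr (\<beta> * \<alpha>) \<le> 1" "2 * C * (b - a) powr \<alpha> \<le> 1"
  shows "(\<lambda>t. \<xi> + young_integral y a t) \<in> holder_ball \<xi> a b \<alpha> (2 * C)"
proof -
  have "C > 0" using field_bounds_pos[OF C] .
  have path: "admissible_path y a b R \<alpha> (2 * C)"
    using holder_ball_admissible[OF y ab(1,3) _ R] \<open>C > 0\<close> by simp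
  have "sewing_const \<theta> * (C * (2 * C) powr \<beta>) * (b - a) powr (\<beta> * \<alpha>) \<le> C * 1"
    using mult_left_mono[OF small(1), of C] \<open>C > 0\<close> by (simp add: mult_ac)
  then have "holder_bound (young_integral y a) a b \<alpha> (2 * C)"
    using young_integral_holder[OF C path] by (auto elim: holder_bound_mono)
  then have hb: "holder_bound (\<lambda>t. \<xi> + young_integral y a t) a b \<alpha> (2 * C)"
    unfolding holder_bound_def by simp
  have "norm (\<xi> + young_integral y a t - \<xi>) \<le> 1" if "a \<le> t" "t \<le> b" for t
  proof -
    have "norm (\<xi> + young_integral y a t - \<xi>) \<le> 2 * C * (t - a) powr \<alpha>"
      using holder_boundD[OF hb order.refl that] young_integral_trivial by simp
    also have "\<dots> \<le> 2 * C * (b - a) powr \<alpha>"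
      using that \<open>C > 0\<close> \<alpha> by (intro mult_left_mono powr_mono2) auto
    finally show ?thesis using small(2) by simp
  qed
  then show ?thesis using hb young_integral_trivial unfolding holder_ball_def by simp
qed

lemma picard_step_contraction:
  assumes C: "field_bounds (3 * R) C" and h: "b - a \<le> h" "h \<le> 1"
    and small: "C * (1 + sewing_const \<theta> * (1 + M powr \<beta>)) * h powr \<alpha> \<le> 1/2"
    and y: "admissible_path y a b R \<alpha> M" and z: "admissible_path z a b R \<alpha> M" and yz: "y a = z a"
    and D: "D \<ge> 0" "holder_bound (\<lambda>r. y r - z r) a b \<alpha> D"
  shows "holder_bound (\<lambda>r. (\<xi> + young_integral y a r) - (\<xi> + young_integral z a r)) a b \<alpha> (D / 2)"
  unfolding holder_bound_def
proof (intro allI impI)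
  fix u v assume uv: "a \<le> u" "u \<le> v" "v \<le> b"
  have "norm (young_integral y u v - young_integral z u v)
      \<le> C * (1 + sewing_const \<theta> * (1 + M powr \<beta>)) * h powr \<alpha> * D * (v - u) powr \<alpha>"
    by (rule young_integral_difference_bound[OF C h y z yz D(2,1) uv])
  also have "\<dots> \<le> 1 / 2 * D * (v - u) powr \<alpha>"
    using small D by (intro mult_right_mono) auto
  finally show "norm ((\<xi> + young_integral y a v - (\<xi> + young_integral z a v))
      - (\<xi> + young_integral y a u - (\<xi> + young_integral z a u))) \<le> D / 2 * (v - u) powr \<alpha>"
    using young_integral_additive[OF y order.refl uv] young_integral_additive[OF z order.refl uv]
    by (simp add: algebra_simps)
qed

lemma local_existence:
  assumes M0: "M0 \<ge> 0"
  obtains h where "h > 0" "\<And>a \<xi>. 0 \<le> a \<Longrightarrow> a < T \<Longrightarrow> norm \<xi> \<le> M0 \<Longrightarrow>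
    \<exists>y M. young_solution y \<xi> a (min (a + h) T) (M0 + 1) M"
proof -
  define R where "R = M0 + 1"
  obtain C where C: "field_bounds (3 * R) C" using field_bounds_exist by blast
  have "R > 0" "C > 0" unfolding R_def using M0 field_bounds_pos[OF C] by auto
  then have CR: "field_bounds R C" using field_bounds_radius_mono[OF C] by simp
  define M where "M = 2 * C"
  define L where "L = C * (1 + sewing_const \<theta> * (1 + M powr \<beta>))"
  have "M \<ge> 0" "sewing_const \<theta> * M powr \<beta> \<ge> 0" "L \<ge> 0"
    unfolding M_def L_def using \<open>C > 0\<close> sewing_const_pos[OF \<theta>_gt_1] by auto
  then obtain h1 h2 h3 where h: "h1 > 0" "h2 > 0" "h3 > 0"
    "\<And>h. 0 \<le> h \<Longrightarrow> h \<le> h1 \<Longrightarrow> sewing_const \<theta> * M powr \<beta> * h powr (\<beta> * \<alpha>) \<le> 1"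
    "\<And>h. 0 \<le> h \<Longrightarrow> h \<le> h2 \<Longrightarrow> M * h powr \<alpha> \<le> 1"
    "\<And>h. 0 \<le> h \<Longrightarrow> h \<le> h3 \<Longrightarrow> L * h powr \<alpha> \<le> 1 / 2"
    using exists_small_powr_bound[of "\<beta> * \<alpha>" "sewing_const \<theta> * M powr \<beta>" 1]
      exists_small_powr_bound[of \<alpha> M 1] exists_small_powr_bound[of \<alpha> L "1/2"] \<alpha> \<beta>
    by (metis mult_pos_pos zero_less_one half_gt_zero)
  define h where "h = min 1 (min h1 (min h2 h3))"
  have "h > 0" unfolding h_def using h by simp
  moreover have "\<exists>y M. young_solution y \<xi> a (min (a + h) T) (M0 + 1) M"
    if a: "0 \<le> a" "a < T" and \<xi>: "norm \<xi> \<le> M0" for a \<xi>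
  proof -
    define b where "b = min (a + h) T"
    have ab: "a \<le> b" "b \<le> T" "b - a \<le> h" "h \<le> 1" unfolding b_def h_def using a h(1-3) by auto
    have R\<xi>: "norm \<xi> + 1 \<le> R" unfolding R_def using \<xi> by simp
    define \<Phi> where "\<Phi> y = (\<lambda>t. \<xi> + young_integral y a t)" for y
    note path = holder_ball_admissible[OF _ a(1) ab(2) \<open>M \<ge> 0\<close> R\<xi>]
    have "\<Phi> y \<in> holder_ball \<xi> a b \<alpha> M" if "y \<in> holder_ball \<xi> a b \<alpha> M" for y
      unfolding \<Phi>_def M_def
      by (rule picard_step_into_ball[OF CR that[unfolded M_def] a(1) ab(1,2) R\<xi>])
        (use h(4)[of "b - a"] h(5)[of "b - a"] ab in \<open>auto simp: M_def h_def\<close>)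
    moreover have "holder_bound (\<lambda>r. \<Phi> y r - \<Phi> z r) a b \<alpha> (D / 2)"
      if "y \<in> holder_ball \<xi> a b \<alpha> M" "z \<in> holder_ball \<xi> a b \<alpha> M" "D \<ge> 0"
        "holder_bound (\<lambda>r. y r - z r) a b \<alpha> D" for y z D
      unfolding \<Phi>_def using that(1,2)
      by (intro picard_step_contraction[OF C ab(3,4) _ path path _ that(3,4)])
        (use h(6)[of h] \<open>h > 0\<close> in \<open>auto simp: L_def h_def holder_ball_def\<close>)
    ultimately obtain y where y: "y \<in> holder_ball \<xi> a b \<alpha> M"
      and fixed: "\<And>t. a \<le> t \<Longrightarrow> t \<le> b \<Longrightarrow> \<Phi> y t = y t"
      using holder_contraction_fixpoint[where \<Phi> = \<Phi>, OF ab(1) \<open>M \<ge> 0\<close> \<alpha>(1)] by blast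
    have "germ_has_integral (young_germ A y) a t (y t - \<xi>)" if "a \<le> t" "t \<le> b" for t
    proof -
      have "y t - \<xi> = young_integral y a t"
        using fixed[OF that] unfolding \<Phi>_def by (metis add_diff_cancel_left')
      then show ?thesis using young_integral_exists(1)[OF CR path[OF y] order.refl that] by simp
    qed
    then have "young_solution y \<xi> a b R M"
      unfolding young_solution_def using ab path[OF y] y unfolding holder_ball_def by auto
    then show ?thesis unfolding b_def R_def by blast
  qed
  ultimately show ?thesis using that by blast
qed

end

section \<open>Uniqueness, concatenation and regularity of solutions\<close>

lemma norm_le_geometric_imp_zero:
  fixes z :: "'a::real_normed_vector"
  assumes "\<And>n. norm z \<le> c * (1/2) ^ n"
  shows "z = 0"
proof -
  have "(\<lambda>n. c * (1/2::real) ^ n) \<longlonglongrightarrow> 0"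
    using tendsto_mult_right_zero[OF LIMSEQ_power_zero[of "1/2::real"]] by simp
  then have "norm z \<le> 0" by (rule LIMSEQ_le_const) (use assms in auto)
  then show ?thesis by simp
qed

lemma interval_step_induct:
  fixes P :: "real \<Rightarrow> bool"
  assumes h: "h > 0" and start: "P a"
    and step: "\<And>c d t. a \<le> c \<Longrightarrow> c \<le> d \<Longrightarrow> d \<le> b \<Longrightarrow> d - c \<le> h \<Longrightarrow>
      (\<forall>s. a \<le> s \<and> s \<le> c \<longrightarrow> P s) \<Longrightarrow> c \<le> t \<Longrightarrow> t \<le> d \<Longrightarrow> P t"
    and t: "a \<le> t" "t \<le> b"
  shows "P t"
proof -
  have steps: "\<forall>s. a \<le> s \<and> s \<le> min (a + real k * h) b \<longrightarrow> P s" for k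
  proof (induction k)
    case 0
    then show ?case using start by auto
  next
    case (Suc k)
    show ?case
    proof (intro allI impI)
      fix s assume s: "a \<le> s \<and> s \<le> min (a + real (Suc k) * h) b"
      show "P s"
      proof (cases "s \<le> min (a + real k * h) b")
        case False
        show ?thesis
          by (rule step[of "min (a + real k * h) b" "min (a + real (Suc k) * h) b", OF _ _ _ _ Suc])
            (use s t h False in \<open>auto simp: algebra_simps min_def\<close>)
      qed (use Suc s in auto)
    qed
  qed
  obtain k :: nat where "(b - a) / h < real k" using reals_Archimedean2 by blast
  then have "b \<le> a + real k * h" using h by (simp add: field_simps)
  then show ?thesis using steps[of k] t by auto
qed

context young_field
begin

lemma young_solutions_agree_step:
  assumes C: "field_bounds (3 * R) C" and h: "h \<le> 1" "C * (1 + sewing_const \<theta> * (1 + M powr \<beta>)) * h powr \<alpha> \<le> 1/2"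
    and x: "young_solution x \<xi> a b R M" and y: "young_solution y \<eta> a b R M"
    and cd: "a \<le> c" "c \<le> d" "d \<le> b" "d - c \<le> h" and xy_c: "x c = y c"
    and t: "c \<le> t" "t \<le> d"
  shows "x t = y t"
proof -
  have x': "admissible_path x c d R \<alpha> M" and y': "admissible_path y c d R \<alpha> M"
    using admissible_path_subinterval young_solutionD(2) x y cd by blast+
  have M: "M \<ge> 0" using admissible_pathD(6)[OF x'] .
  text \<open>Each pass through the integral equation halves the Hoelder constant of \<open>x - y\<close>.\<close>
  have halving: "holder_bound (\<lambda>r. x r - y r) c d \<alpha> ((M + M) * (1/2) ^ n)" for n
  proof (induction n)
    case 0
    show ?case using holder_bound_diff[OF admissible_pathD(7)[OF x'] admissible_pathD(7)[OF y']] by simp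
  next
    case (Suc n)
    show ?case
      unfolding holder_bound_def
    proof (intro allI impI)
      fix u v assume uv: "c \<le> u" "u \<le> v" "v \<le> d"
      have "norm (young_integral x u v - young_integral y u v)
          \<le> C * (1 + sewing_const \<theta> * (1 + M powr \<beta>)) * h powr \<alpha> * ((M + M) * (1/2) ^ n) * (v - u) powr \<alpha>"
        using young_integral_difference_bound[OF C cd(4) h(1) x' y' xy_c Suc _ uv] M by simp
      also have "\<dots> \<le> 1/2 * ((M + M) * (1/2) ^ n) * (v - u) powr \<alpha>"
        using h(2) M by (intro mult_right_mono) auto
      moreover have "(x v - y v) - (x u - y u) = (x v - x u) - (y v - y u)" by (simp add: algebra_simps)
      moreover have "x v - x u = young_integral x u v" "y v - y u = young_integral y u v"
        using young_solution_increment[OF x, of u v] young_solution_increment[OF y, of u v] uv cd by auto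
      ultimately show "norm ((x v - y v) - (x u - y u)) \<le> (M + M) * (1/2) ^ Suc n * (v - u) powr \<alpha>"
        by simp
    qed
  qed
  have "norm ((x t - y t) - (x c - y c)) \<le> ((M + M) * (t - c) powr \<alpha>) * (1/2) ^ n" for n
    using holder_boundD[OF halving[of n] order.refl t] by (simp add: mult_ac)
  then have "(x t - y t) - (x c - y c) = 0" by (rule norm_le_geometric_imp_zero)
  then show ?thesis using xy_c by simp
qed

lemma young_solution_unique:
  assumes x: "young_solution x \<xi> a b R1 M1" and y: "young_solution y \<xi> a b R2 M2"
    and t: "a \<le> t" "t \<le> b"
  shows "x t = y t"
proof -
  define R M where "R = max R1 R2" and "M = max M1 M2"
  have x': "young_solution x \<xi> a b R M" and y': "young_solution y \<xi> a b R M"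
    unfolding R_def M_def
    by (rule young_solution_mono[OF x max.cobounded1 max.cobounded1],
        rule young_solution_mono[OF y max.cobounded2 max.cobounded2])
  obtain C where C: "field_bounds (3 * R) C" using field_bounds_exist by blast
  have L: "C * (1 + sewing_const \<theta> * (1 + M powr \<beta>)) \<ge> 0"
    using field_bounds_pos[OF C] sewing_const_pos[OF \<theta>_gt_1] by simp
  obtain h0 where "h0 > 0"
    and h0: "\<And>h. 0 \<le> h \<Longrightarrow> h \<le> h0 \<Longrightarrow> C * (1 + sewing_const \<theta> * (1 + M powr \<beta>)) * h powr \<alpha> \<le> 1/2"
    by (rule exists_small_powr_bound[OF \<alpha>(1) L, where B = "1/2"]) (simp, blast)
  define h where "h = min 1 h0"
  have h: "h > 0" "h \<le> 1" "C * (1 + sewing_const \<theta> * (1 + M powr \<beta>)) * h powr \<alpha> \<le> 1/2"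
    unfolding h_def using \<open>h0 > 0\<close> h0 by auto
  show ?thesis
  proof (rule interval_step_induct[OF h(1), where P = "\<lambda>t. x t = y t", OF _ _ t])
    show "x a = y a" using young_solutionD(3)[OF x] young_solutionD(3)[OF y] by simp
  next
    fix c d s assume cd: "a \<le> c" "c \<le> d" "d \<le> b" "d - c \<le> h"
      and before: "\<forall>s. a \<le> s \<and> s \<le> c \<longrightarrow> x s = y s" and s: "c \<le> s" "s \<le> d"
    have "x c = y c" using before cd by simp
    from young_solutions_agree_step[OF C h(2,3) x' y' cd this s] show "x s = y s" .
  qed
qed

lemma young_solution_concat:
  assumes x: "young_solution x \<xi> a t R1 M1" and y: "young_solution y (x t) t b R2 M2"
  defines "z \<equiv> \<lambda>r. if r \<le> t then x r else y r"
  shows "young_solution z \<xi> a b (max R1 R2) (M1 + M2)"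
proof -
  note x' = young_solutionD[OF x] and y' = young_solutionD[OF y]
  note xp = admissible_pathD[OF x'(2)] and yp = admissible_pathD[OF y'(2)]
  have zx: "z r = x r" if "r \<le> t" for r using that unfolding z_def by simp
  have zy: "z r = y r" if "t \<le> r" for r using that y'(3) unfolding z_def by auto
  have germ_zx: "young_germ A z p q = young_germ A x p q" if "p \<le> t" for p q
    using zx[OF that] unfolding young_germ_def by simp
  have germ_zy: "young_germ A z p q = young_germ A y p q" if "t \<le> p" for p q
    using zy[OF that] unfolding young_germ_def by simp
  have hz: "holder_bound z a b \<alpha> (M1 + M2)"
    unfolding z_def using holder_bound_concat[OF xp(7) yp(7)] y'(3) xp(6) yp(6) \<alpha> by simp
  have zb: "norm (z r) \<le> max R1 R2" if "a \<le> r" "r \<le> b" for r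
  proof (cases "r \<le> t")
    case True
    then show ?thesis using xp(3)[of r] zx that by (simp add: max.coboundedI1)
  next
    case False
    then show ?thesis using yp(3)[of r] zy[of r] that by (simp add: max.coboundedI2)
  qed
  have zpath: "admissible_path z a b (max R1 R2) \<alpha> (M1 + M2)"
    unfolding admissible_path_def using xp yp hz zb by auto
  have "germ_has_integral (young_germ A z) a s (z s - \<xi>)" if s: "a \<le> s" "s \<le> b" for s
  proof (cases "s \<le> t")
    case True
    have "germ_has_integral (young_germ A z) a s (x s - \<xi>) \<longleftrightarrow> germ_has_integral (young_germ A x) a s (x s - \<xi>)"
      by (rule germ_has_integral_cong) (use germ_zx True in auto)
    then show ?thesis using x'(4)[OF s(1) True] zx[OF True] by simp
  next
    case False
    have "germ_has_integral (young_germ A z) a t (x t - \<xi>) \<longleftrightarrow> germ_has_integral (young_germ A x) a t (x t - \<xi>)"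
      by (rule germ_has_integral_cong) (use germ_zx in auto)
    then have "germ_has_integral (young_germ A z) a t (x t - \<xi>)" using x'(4)[OF x'(1) order.refl] by simp
    then have I1: "young_integral z a t = x t - \<xi>" using young_integral_eq[OF x'(1)] by blast
    have "germ_has_integral (young_germ A z) t s (y s - x t) \<longleftrightarrow> germ_has_integral (young_germ A y) t s (y s - x t)"
      by (rule germ_has_integral_cong) (use germ_zy in auto)
    then have "germ_has_integral (young_germ A z) t s (y s - x t)" using y'(4)[of s] False s by simp
    then have I2: "young_integral z t s = y s - x t" using young_integral_eq False by simp
    have "young_integral z a s = z s - \<xi>"
      using young_integral_additive[OF zpath order.refl, of t s] I1 I2 zy[of s] False s x'(1) by simp
    moreover obtain C where "field_bounds (max R1 R2) C" using field_bounds_exist .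
    ultimately show ?thesis using young_integral_exists(1)[OF _ zpath order.refl s] by simp
  qed
  then show ?thesis
    unfolding young_solution_def using zpath zx[of a] x'(1,3) y'(1) by auto
qed

lemma young_solution_is_solution:
  assumes "young_solution x x0 0 b R M"
  shows "is_solution T \<alpha> \<beta> A x0 {0..b} x"
proof -
  note x = young_solutionD[OF assms] and xp = admissible_pathD[OF young_solutionD(2)[OF assms]]
  have "holder_on \<alpha> {0..t} x" if "t \<in> {0..b}" for t
    using holder_bound_imp_holder_on[OF holder_bound_subinterval[OF xp(7) order.refl]] that by simp
  then show ?thesis
    unfolding is_solution_def young_has_integral_iff_germ
    using x xp \<alpha> \<theta>_gt_1 by (auto intro!: exI[of _ \<alpha>])
qed

text \<open>A solution in the sense of \<open>is_solution\<close> is only \<open>\<gamma>\<close>-Hoelder for some admissible \<open>\<gamma>\<close>;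
  it is \<open>\<alpha>\<close>-Hoelder because it is a Young integral.\<close>

lemma is_solution_imp_young_solution:
  assumes S: "is_solution T \<alpha> \<beta> A x0 I x" and t0: "t0 \<in> I"
  obtains R M where "young_solution x x0 0 t0 R M"
proof -
  have I: "is_interval I" "0 \<in> I" "I \<subseteq> {0..T}" using S unfolding is_solution_def by auto
  have t0T: "0 \<le> t0" "t0 \<le> T" using I t0 by auto
  obtain \<gamma> where \<gamma>: "0 < \<gamma>" "\<alpha> + \<beta> * \<gamma> > 1" "holder_on \<gamma> {0..t0} x"
    using S t0 unfolding is_solution_def by blast
  obtain Mg where Mg: "Mg \<ge> 0" "holder_bound x 0 t0 \<gamma> Mg" using holder_on_imp_holder_bound[OF \<gamma>(3)] .
  have integral: "germ_has_integral (young_germ A x) 0 t (x t - x0)" if "0 \<le> t" "t \<le> t0" for t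
  proof -
    have "t \<in> I" using I(1,2) t0 that unfolding is_interval_1 by blast
    then show ?thesis using S unfolding is_solution_def young_has_integral_iff_germ by blast
  qed
  have x0: "x 0 = x0" using germ_integral_trivial[OF integral[OF order.refl t0T(1)]] by simp
  define R where "R = norm x0 + Mg * t0 powr \<gamma>"
  have "norm (x r) \<le> R" if "0 \<le> r" "r \<le> t0" for r
  proof -
    have "norm (x r - x 0) \<le> Mg * t0 powr \<gamma>"
      using holder_boundD[OF Mg(2) order.refl that] Mg(1) that \<gamma>(1)
      by (smt (verit) mult_left_mono powr_mono2 diff_zero)
    then show ?thesis unfolding R_def using norm_triangle_ineq2[of "x r" "x 0"] x0 by simp
  qed
  then have path: "admissible_path x 0 t0 R \<gamma> Mg"
    unfolding admissible_path_def using t0T \<gamma> Mg by auto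
  obtain C where C: "field_bounds R C" using field_bounds_exist by blast
  define M where "M = C + sewing_const (\<alpha> + \<beta> * \<gamma>) * (C * Mg powr \<beta>) * (t0 - 0) powr (\<beta> * \<gamma>)"
  have x_eq: "x t = x0 + young_integral x 0 t" if "0 \<le> t" "t \<le> t0" for t
    using young_integral_eq[OF that(1) integral[OF that]] by simp
  have "holder_bound x 0 t0 \<alpha> M"
    unfolding holder_bound_def
  proof (intro allI impI)
    fix u v assume uv: "0 \<le> u" "u \<le> v" "v \<le> t0"
    then have "x v - x u = young_integral x 0 v - young_integral x 0 u" using x_eq[of u] x_eq[of v] by simp
    then show "norm (x v - x u) \<le> M * (v - u) powr \<alpha>"
      using holder_boundD[OF young_integral_holder[OF C path] uv] unfolding M_def by simp
  qed
  moreover have "M \<ge> 0"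
    unfolding M_def using field_bounds_pos[OF C] sewing_const_pos[OF \<gamma>(2)] by simp
  ultimately have "young_solution x x0 0 t0 R M"
    unfolding young_solution_def admissible_path_def using path admissible_pathD[OF path] x0 integral
      \<alpha> \<theta>_gt_1 t0T by auto
  then show ?thesis using that by blast
qed

end

section \<open>The maximal solution\<close>

lemma interval_from_0_cases:
  fixes S :: "real set"
  assumes S: "is_interval S" "0 \<in> S" "S \<subseteq> {0..T}"
  obtains c where "0 \<le> c" "c \<le> T" "S = {0..c}" | c where "0 < c" "c \<le> T" "S = {0..<c}"
proof -
  define c where "c = Sup S"
  have bdd: "bdd_above S" using bdd_above_mono[OF bdd_above_Icc S(3)] .
  have "0 \<le> c" unfolding c_def using cSup_upper[OF S(2) bdd] .
  have "c \<le> T" unfolding c_def using S by (intro cSup_least) auto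
  have upper: "S \<subseteq> {0..c}"
  proof
    fix t assume "t \<in> S"
    then show "t \<in> {0..c}" using cSup_upper[OF \<open>t \<in> S\<close> bdd] S(3) unfolding c_def by auto
  qed
  have lower: "{0..<c} \<subseteq> S"
  proof
    fix t assume t: "t \<in> {0..<c}"
    have "S \<noteq> {}" using S(2) by blast
    moreover have "t < Sup S" using t unfolding c_def by simp
    ultimately obtain s where "s \<in> S" "t < s" using less_cSup_iff[OF _ bdd] by blast
    then show "t \<in> S" using S(1)[unfolded is_interval_1, rule_format, of 0 s t] S(2) t by simp
  qed
  show ?thesis
  proof (cases "c \<in> S")
    case True
    have "S = {0..c}"
    proof
      show "{0..c} \<subseteq> S"
      proof
        fix t assume "t \<in> {0..c}"
        then show "t \<in> S" using lower True by (cases "t = c") auto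
      qed
    qed (rule upper)
    then show ?thesis using that(1) \<open>0 \<le> c\<close> \<open>c \<le> T\<close> by blast
  next
    case False
    have "S = {0..<c}"
    proof
      show "S \<subseteq> {0..<c}"
      proof
        fix t assume "t \<in> S"
        then have "t \<in> {0..c}" "t \<noteq> c" using upper False by auto
        then show "t \<in> {0..<c}" by simp
      qed
    qed (rule lower)
    moreover have "c \<noteq> 0" using \<open>S = {0..<c}\<close> S(2) by auto
    ultimately show ?thesis using that(2)[of c] \<open>0 \<le> c\<close> \<open>c \<le> T\<close> by simp
  qed
qed

context young_field
begin

lemma solutions_agree:
  assumes "is_solution T \<alpha> \<beta> A x0 I x" "is_solution T \<alpha> \<beta> A x0 J y" "t \<in> I" "t \<in> J"
  shows "x t = y t"
proof -
  obtain R1 M1 where x: "young_solution x x0 0 t R1 M1" using is_solution_imp_young_solution[OF assms(1,3)] .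
  obtain R2 M2 where y: "young_solution y x0 0 t R2 M2" using is_solution_imp_young_solution[OF assms(2,4)] .
  show ?thesis using young_solution_unique[OF x y _ order.refl] young_solutionD(1)[OF x] by simp
qed

lemma trivial_solution: "is_solution T \<alpha> \<beta> A x0 {0..0} (\<lambda>_. x0)"
proof (rule young_solution_is_solution)
  show "young_solution (\<lambda>_. x0) x0 0 0 (norm x0) 0"
    unfolding young_solution_def admissible_path_def holder_bound_def
    using T_pos \<alpha> \<theta>_gt_1 germ_has_integral_trivial by auto
qed

lemma solution_extension:
  assumes "M0 \<ge> 0"
  obtains h where "h > 0" "\<And>I x t. is_solution T \<alpha> \<beta> A x0 I x \<Longrightarrow> t \<in> I \<Longrightarrow> t < T \<Longrightarrow> norm (x t) \<le> M0 \<Longrightarrow>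
    \<exists>z. is_solution T \<alpha> \<beta> A x0 {0..min (t + h) T} z"
proof -
  obtain h where h: "h > 0" "\<And>a \<xi>. 0 \<le> a \<Longrightarrow> a < T \<Longrightarrow> norm \<xi> \<le> M0 \<Longrightarrow>
      \<exists>y M. young_solution y \<xi> a (min (a + h) T) (M0 + 1) M"
    using local_existence[OF assms] by blast
  have "\<exists>z. is_solution T \<alpha> \<beta> A x0 {0..min (t + h) T} z"
    if S: "is_solution T \<alpha> \<beta> A x0 I x" "t \<in> I" and t: "t < T" "norm (x t) \<le> M0" for I x t
  proof -
    obtain R M where x: "young_solution x x0 0 t R M" using is_solution_imp_young_solution[OF S] .
    obtain y My where "young_solution y (x t) t (min (t + h) T) (M0 + 1) My"
      using h(2) t young_solutionD(1)[OF x] by blast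
    from young_solution_is_solution[OF young_solution_concat[OF x this]] show ?thesis by blast
  qed
  then show ?thesis by (rule that[OF h(1)])
qed

definition max_interval :: "'v \<Rightarrow> real set" where
  "max_interval x0 = \<Union>{I. \<exists>x. is_solution T \<alpha> \<beta> A x0 I x}"

definition max_solution :: "'v \<Rightarrow> real \<Rightarrow> 'v" where
  "max_solution x0 t = (SOME v. \<exists>I x. is_solution T \<alpha> \<beta> A x0 I x \<and> t \<in> I \<and> x t = v)"

lemma max_interval_iff: "t \<in> max_interval x0 \<longleftrightarrow> (\<exists>I x. is_solution T \<alpha> \<beta> A x0 I x \<and> t \<in> I)"
  unfolding max_interval_def by blast

lemma max_solution_eq:
  assumes "is_solution T \<alpha> \<beta> A x0 I x" "t \<in> I"
  shows "max_solution x0 t = x t"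
  unfolding max_solution_def
proof (rule someI2[of _ "x t"])
  show "\<exists>I' x'. is_solution T \<alpha> \<beta> A x0 I' x' \<and> t \<in> I' \<and> x' t = x t" using assms by blast
next
  fix v assume "\<exists>I' x'. is_solution T \<alpha> \<beta> A x0 I' x' \<and> t \<in> I' \<and> x' t = v"
  then obtain I' x' where "is_solution T \<alpha> \<beta> A x0 I' x'" "t \<in> I'" "x' t = v" by blast
  then show "v = x t" using solutions_agree[OF _ assms(1) _ assms(2)] by simp
qed

lemma solution_initial_segment:
  assumes "is_solution T \<alpha> \<beta> A x0 I x" "t \<in> I" "0 \<le> s" "s \<le> t"
  shows "s \<in> I"
  using assms unfolding is_solution_def is_interval_1 by blast

lemma max_interval_subset: "max_interval x0 \<subseteq> {0..T}"
  unfolding max_interval_def is_solution_def by blast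

lemma max_interval_solution: "is_solution T \<alpha> \<beta> A x0 (max_interval x0) (max_solution x0)"
  unfolding is_solution_def
proof (intro conjI ballI)
  show "is_interval (max_interval x0)" unfolding is_interval_1
  proof (intro ballI allI impI)
    fix a b c assume ab: "a \<in> max_interval x0" "b \<in> max_interval x0" and c: "a \<le> c \<and> c \<le> b"
    obtain I x where "is_solution T \<alpha> \<beta> A x0 I x" "b \<in> I" using ab(2) max_interval_iff by blast
    moreover have "0 \<le> c" using ab(1) c max_interval_subset by force
    ultimately show "c \<in> max_interval x0" using solution_initial_segment c max_interval_iff by blast
  qed
  show "0 \<in> max_interval x0" using trivial_solution[of x0] max_interval_iff[of 0 x0] by auto
  show "max_interval x0 \<subseteq> {0..T}" by (rule max_interval_subset)
  fix t assume "t \<in> max_interval x0"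
  then obtain I x where S: "is_solution T \<alpha> \<beta> A x0 I x" "t \<in> I" using max_interval_iff by blast
  have eq: "max_solution x0 r = x r" if "r \<in> {0..t}" for r
    using max_solution_eq[OF S(1) solution_initial_segment[OF S]] that by simp
  obtain \<gamma> where "0 < \<gamma>" "\<gamma> \<le> 1" "\<alpha> + \<beta> * \<gamma> > 1" "holder_on \<gamma> {0..t} x"
    using S unfolding is_solution_def by blast
  moreover have "holder_on \<gamma> {0..t} (max_solution x0) \<longleftrightarrow> holder_on \<gamma> {0..t} x"
    unfolding holder_on_def using eq by simp
  ultimately show "\<exists>\<gamma>>0. \<gamma> \<le> 1 \<and> 1 < \<alpha> + \<beta> * \<gamma> \<and> holder_on \<gamma> {0..t} (max_solution x0)" by blast
  have "young_germ A (max_solution x0) p q = young_germ A x p q" if "0 \<le> p" "p \<le> t" for p q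
    using eq that unfolding young_germ_def by simp
  then have "germ_has_integral (young_germ A (max_solution x0)) 0 t (x t - x0) \<longleftrightarrow>
      germ_has_integral (young_germ A x) 0 t (x t - x0)"
    by (intro germ_has_integral_cong) auto
  moreover have "0 \<le> t" using S max_interval_iff max_interval_subset by force
  ultimately show "young_has_integral A (max_solution x0) 0 t (max_solution x0 t - x0)"
    using S eq[of t] unfolding young_has_integral_iff_germ is_solution_def by simp
qed

lemma max_interval_is_max_solution: "is_max_solution T \<alpha> \<beta> A x0 (max_interval x0) (max_solution x0)"
  unfolding is_max_solution_def using max_interval_solution max_interval_iff by blast

lemma max_solution_unique:
  assumes "is_max_solution T \<alpha> \<beta> A x0 J y"
  shows "J = max_interval x0" "\<forall>t\<in>J. y t = max_solution x0 t"
proof -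
  have S: "is_solution T \<alpha> \<beta> A x0 J y" using assms unfolding is_max_solution_def by blast
  show agree: "\<forall>t\<in>J. y t = max_solution x0 t" using max_solution_eq[OF S] by simp
  have "J \<subseteq> max_interval x0" using S max_interval_iff by blast
  show "J = max_interval x0"
  proof (rule ccontr)
    assume "J \<noteq> max_interval x0"
    then have "is_solution T \<alpha> \<beta> A x0 (max_interval x0) (max_solution x0) \<and> J \<subset> max_interval x0 \<and>
        (\<forall>t\<in>J. max_solution x0 t = y t)"
      using \<open>J \<subseteq> max_interval x0\<close> max_interval_solution agree by auto
    with assms show False unfolding is_max_solution_def by blast
  qed
qed

lemma max_interval_closed_imp_T:
  assumes I: "max_interval x0 = {0..c}"
  shows "c = T"
proof (rule ccontr)
  assume "c \<noteq> T"
  moreover have c: "c \<in> max_interval x0" "c \<le> T"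
    using I max_interval_solution[of x0] unfolding is_solution_def by auto
  ultimately have "c < T" by simp
  obtain h where "h > 0" and h: "\<And>I x t. is_solution T \<alpha> \<beta> A x0 I x \<Longrightarrow> t \<in> I \<Longrightarrow> t < T \<Longrightarrow>
      norm (x t) \<le> norm (max_solution x0 c) \<Longrightarrow> \<exists>z. is_solution T \<alpha> \<beta> A x0 {0..min (t + h) T} z"
    by (rule solution_extension[OF norm_ge_zero]) blast
  obtain z where "is_solution T \<alpha> \<beta> A x0 {0..min (c + h) T} z"
    using h[OF max_interval_solution c(1) \<open>c < T\<close>] by blast
  moreover have "min (c + h) T \<in> {0..min (c + h) T}" using c I \<open>h > 0\<close> by auto
  ultimately have "min (c + h) T \<in> max_interval x0" using max_interval_iff by blast
  then show False using I \<open>c < T\<close> \<open>h > 0\<close> by auto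
qed

text \<open>If the maximal interval is open at \<open>c\<close>, the solution must leave every ball as \<open>t \<rightarrow> c\<close>:
  otherwise it returns to a ball arbitrarily close to \<open>c\<close>, and the extension step, whose length
  depends only on the radius of the ball, reaches past \<open>c\<close>.\<close>

lemma max_interval_open_blowup:
  assumes I: "max_interval x0 = {0..<c}" and c: "0 < c"
  shows "filterlim (\<lambda>t. norm (max_solution x0 t)) at_top (at_left c)"
  unfolding filterlim_at_top
proof (rule ccontr)
  assume "\<not> (\<forall>Z. \<forall>\<^sub>F t in at_left c. Z \<le> norm (max_solution x0 t))"
  then obtain Z where Z: "\<not> (\<forall>\<^sub>F t in at_left c. Z \<le> norm (max_solution x0 t))" by blast
  have cT: "c \<le> T"
  proof (rule ccontr)
    assume "\<not> c \<le> T"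
    then have "(T + c) / 2 \<in> max_interval x0" using I T_pos by auto
    then have "(T + c) / 2 \<le> T" using max_interval_subset[of x0] by auto
    then show False using \<open>\<not> c \<le> T\<close> by simp
  qed
  obtain h where "h > 0" and h: "\<And>I x t. is_solution T \<alpha> \<beta> A x0 I x \<Longrightarrow> t \<in> I \<Longrightarrow> t < T \<Longrightarrow>
      norm (x t) \<le> max Z 0 \<Longrightarrow> \<exists>z. is_solution T \<alpha> \<beta> A x0 {0..min (t + h) T} z"
    by (rule solution_extension[OF max.cobounded2]) blast
  have "max 0 (c - h) < c" using c \<open>h > 0\<close> by simp
  with Z obtain y where y: "max 0 (c - h) < y" "y < c" "\<not> Z \<le> norm (max_solution x0 y)"
    unfolding eventually_at_left_field by blast
  then have "y \<in> max_interval x0" "y < T" "norm (max_solution x0 y) \<le> max Z 0" using I cT by auto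
  then obtain z where "is_solution T \<alpha> \<beta> A x0 {0..min (y + h) T} z"
    using h[OF max_interval_solution] by blast
  moreover have "c \<in> {0..min (y + h) T}" using y cT c by auto
  ultimately have "c \<in> max_interval x0" using max_interval_iff by blast
  then show False using I by simp
qed

lemma maximal_solution:
  obtains I x where "is_max_solution T \<alpha> \<beta> A x0 I x"
    "I = {0..T} \<or> (\<exists>T'. 0 < T' \<and> T' \<le> T \<and> I = {0..<T'} \<and> filterlim (\<lambda>t. norm (x t)) at_top (at_left T'))"
    "\<And>J y. is_max_solution T \<alpha> \<beta> A x0 J y \<Longrightarrow> J = I \<and> (\<forall>t\<in>I. y t = x t)"
proof -
  have S: "is_solution T \<alpha> \<beta> A x0 (max_interval x0) (max_solution x0)" by (rule max_interval_solution)
  have "max_interval x0 = {0..T} \<or> (\<exists>T'. 0 < T' \<and> T' \<le> T \<and> max_interval x0 = {0..<T'} \<and>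
      filterlim (\<lambda>t. norm (max_solution x0 t)) at_top (at_left T'))"
  proof (rule interval_from_0_cases[of "max_interval x0"])
    show "is_interval (max_interval x0)" "0 \<in> max_interval x0" "max_interval x0 \<subseteq> {0..T}"
      using S unfolding is_solution_def by auto
  next
    fix c assume "max_interval x0 = {0..c}"
    then show ?thesis using max_interval_closed_imp_T by blast
  next
    fix c assume "0 < c" "c \<le> T" "max_interval x0 = {0..<c}"
    then show ?thesis using max_interval_open_blowup by blast
  qed
  moreover have "\<And>J y. is_max_solution T \<alpha> \<beta> A x0 J y \<Longrightarrow>
      J = max_interval x0 \<and> (\<forall>t\<in>max_interval x0. y t = max_solution x0 t)"
    using max_solution_unique by blast
  ultimately show ?thesis using that max_interval_is_max_solution by blast
qed

end

section \<open>Global solutions under sublinear growth\<close>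

lemma Inf_bound_constant:
  fixes f g :: "'a \<Rightarrow> 'b \<Rightarrow> real"
  assumes ex: "m \<le> M0" "\<forall>u v. Q u v \<longrightarrow> f u v \<le> M0 * g u v" and g: "\<And>u v. Q u v \<Longrightarrow> g u v \<ge> 0"
  defines "S \<equiv> {M. m \<le> M \<and> (\<forall>u v. Q u v \<longrightarrow> f u v \<le> M * g u v)}"
  shows "Inf S \<in> S"
proof -
  have ne: "S \<noteq> {}" unfolding S_def using ex by blast
  have "m \<le> Inf S" using ne unfolding S_def by (intro cInf_greatest) auto
  moreover have "f u v \<le> Inf S * g u v" if Q: "Q u v" for u v
  proof (cases "g u v = 0")
    case True
    then show ?thesis using ex Q by fastforce
  next
    case False
    then have gp: "g u v > 0" using g[OF Q] by simp
    have "f u v / g u v \<le> M" if "M \<in> S" for M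
      using that Q gp unfolding S_def by (simp add: divide_le_eq)
    then have "f u v / g u v \<le> Inf S" using ne by (intro cInf_greatest) auto
    then show ?thesis using gp by (simp add: divide_le_eq)
  qed
  ultimately show ?thesis unfolding S_def by blast
qed

lemma least_holder_constant:
  assumes "holder_bound x a b \<gamma> M" "M \<ge> 0"
  obtains H where "H \<ge> 0" "holder_bound x a b \<gamma> H" "\<And>H'. H' \<ge> 0 \<Longrightarrow> holder_bound x a b \<gamma> H' \<Longrightarrow> H \<le> H'"
proof -
  define S where "S = {H. 0 \<le> H \<and> (\<forall>u v. a \<le> u \<and> u \<le> v \<and> v \<le> b \<longrightarrow> norm (x v - x u) \<le> H * (v - u) powr \<gamma>)}"
  have "Inf S \<in> S"
    using Inf_bound_constant[of 0 M "\<lambda>u v. a \<le> u \<and> u \<le> v \<and> v \<le> b" "\<lambda>u v. norm (x v - x u)"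
        "\<lambda>u v. (v - u) powr \<gamma>"] assms
    unfolding S_def holder_bound_def by simp
  moreover have "Inf S \<le> H'" if "H' \<ge> 0" "holder_bound x a b \<gamma> H'" for H'
    using that unfolding S_def holder_bound_def by (intro cInf_lower bdd_belowI[of _ 0]) auto
  ultimately show ?thesis using that unfolding S_def holder_bound_def by auto
qed

lemma least_sup_bound:
  assumes "\<And>r. a \<le> r \<Longrightarrow> r \<le> b \<Longrightarrow> norm (x r) \<le> R"
  obtains Rm where "1 \<le> Rm" "\<And>r. a \<le> r \<Longrightarrow> r \<le> b \<Longrightarrow> norm (x r) \<le> Rm"
    "\<And>R'. 1 \<le> R' \<Longrightarrow> (\<And>r. a \<le> r \<Longrightarrow> r \<le> b \<Longrightarrow> norm (x r) \<le> R') \<Longrightarrow> Rm \<le> R'"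
proof -
  define S where "S = {r. 1 \<le> r \<and> (\<forall>u v. a \<le> v \<and> v \<le> b \<longrightarrow> norm (x v) \<le> r * 1)}"
  have "Inf S \<in> S"
    using Inf_bound_constant[of 1 "max 1 R" "\<lambda>u v. a \<le> v \<and> v \<le> b" "\<lambda>u v. norm (x v)" "\<lambda>u v. 1"] assms
    unfolding S_def by (force intro: max.coboundedI2)
  moreover have "Inf S \<le> R'" if "1 \<le> R'" "\<And>r. a \<le> r \<Longrightarrow> r \<le> b \<Longrightarrow> norm (x r) \<le> R'" for R'
    using that unfolding S_def by (intro cInf_lower bdd_belowI[of _ 1]) auto
  ultimately show ?thesis using that unfolding S_def by auto
qed

lemma le_max_of_sublinear_bound:
  fixes H R A0 lam \<beta> :: real
  assumes H: "H \<ge> 0" and R: "R \<ge> 1" and lam: "lam \<ge> 0" and \<beta>: "\<beta> > 0" and lb: "lam + \<beta> \<le> 1"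
    and ineq: "H \<le> A0 + 1/2 * (R powr lam * H powr \<beta>)"
  shows "H \<le> max R (2 * A0)"
proof (cases "H < R")
  case False
  then have "R powr lam * H powr \<beta> \<le> H powr lam * H powr \<beta>"
    using R lam by (intro mult_right_mono powr_mono2) auto
  also have "\<dots> = H powr (lam + \<beta>)" by (simp add: powr_add)
  also have "\<dots> \<le> H powr 1" using False R lb by (intro powr_mono) auto
  finally show ?thesis using ineq False R by simp
qed simp

locale young_field_growth = young_field T \<alpha> \<beta> A DA for T \<alpha> \<beta> and A :: "real \<Rightarrow> 'v::banach \<Rightarrow> 'v" and DA +
  fixes lam :: real
  assumes lam: "0 < lam" "\<beta> + lam \<le> 1"
    and growth: "growth_holder_field T \<alpha> \<beta> lam A"
begin

definition growth_bound :: "real \<Rightarrow> bool" where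
  "growth_bound Cg \<longleftrightarrow> Cg \<ge> 1 \<and> (\<forall>s t. 0 \<le> s \<and> s \<le> t \<and> t \<le> T \<longrightarrow>
     norm (A t 0 - A s 0) \<le> Cg * (t - s) powr \<alpha> \<and>
     (\<forall>R x y. 1 \<le> R \<and> norm x \<le> R \<and> norm y \<le> R \<longrightarrow>
        norm ((A t x - A s x) - (A t y - A s y)) \<le> Cg * (t - s) powr \<alpha> * R powr lam * norm (x - y) powr \<beta>))"

lemma growth_bound_exists: obtains Cg where "growth_bound Cg"
proof -
  obtain C where C: "\<forall>s t. 0 \<le> s \<and> s < t \<and> t \<le> T \<longrightarrow>
        norm (A t 0 - A s 0) \<le> C * (t - s) powr \<alpha> \<and>
        (\<forall>R\<ge>1. \<forall>x y. norm x \<le> R \<and> norm y \<le> R \<and> x \<noteq> y \<longrightarrow>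
           norm ((A t x - A s x) - (A t y - A s y)) \<le> C * (t - s) powr \<alpha> * R powr lam * norm (x - y) powr \<beta>)"
    using growth unfolding growth_holder_field_def by (rule exE)
  have "growth_bound (max C 1)"
    unfolding growth_bound_def
  proof (intro conjI allI impI)
    fix s t :: real assume st: "0 \<le> s \<and> s \<le> t \<and> t \<le> T"
    have mono: "C * (t - s) powr \<alpha> * z \<le> max C 1 * (t - s) powr \<alpha> * z" if "z \<ge> 0" for z
      using that by (intro mult_right_mono) auto
    show "norm (A t 0 - A s 0) \<le> max C 1 * (t - s) powr \<alpha>"
    proof (cases "s = t")
      case False
      then have "norm (A t 0 - A s 0) \<le> C * (t - s) powr \<alpha>" using C[rule_format, of s t] st by auto
      then show ?thesis using mono[of 1] by simp
    qed simp
    fix R :: real and x y :: 'v assume Rxy: "1 \<le> R \<and> norm x \<le> R \<and> norm y \<le> R"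
    show "norm ((A t x - A s x) - (A t y - A s y)) \<le> max C 1 * (t - s) powr \<alpha> * R powr lam * norm (x - y) powr \<beta>"
    proof (cases "s = t \<or> x = y")
      case False
      then have "norm ((A t x - A s x) - (A t y - A s y)) \<le> C * (t - s) powr \<alpha> * (R powr lam * norm (x - y) powr \<beta>)"
        using C[rule_format, of s t] st Rxy by (auto simp: mult.assoc)
      then show ?thesis using mono[of "R powr lam * norm (x - y) powr \<beta>"] by (simp add: mult.assoc)
    qed auto
  qed simp
  then show ?thesis by (rule that)
qed

lemma growth_bound_ge_1: "growth_bound Cg \<Longrightarrow> Cg \<ge> 1"
  unfolding growth_bound_def by simp

lemma growth_boundD:
  assumes "growth_bound Cg" "0 \<le> s" "s \<le> t" "t \<le> T"
  shows "norm (A t 0 - A s 0) \<le> Cg * (t - s) powr \<alpha>"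
    "\<And>R x y. 1 \<le> R \<Longrightarrow> norm x \<le> R \<Longrightarrow> norm y \<le> R \<Longrightarrow>
       norm ((A t x - A s x) - (A t y - A s y)) \<le> Cg * (t - s) powr \<alpha> * R powr lam * norm (x - y) powr \<beta>"
  using assms unfolding growth_bound_def by auto

lemma increment_growth:
  assumes Cg: "growth_bound Cg" and st: "0 \<le> s" "s \<le> t" "t \<le> T" and R: "1 \<le> R" and x: "norm x \<le> R"
  shows "norm (A t x - A s x) \<le> Cg * (t - s) powr \<alpha> * (1 + R)"
proof -
  note G = growth_bound_ge_1[OF Cg] growth_boundD[OF Cg st]
  have "R powr lam * norm (x - 0) powr \<beta> \<le> R powr lam * R powr \<beta>"
    using x \<beta> by (intro mult_left_mono powr_mono2) auto
  also have "\<dots> = R powr (lam + \<beta>)" by (simp add: powr_add)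
  also have "\<dots> \<le> R powr 1" using R lam by (intro powr_mono) auto
  finally have "Cg * (t - s) powr \<alpha> * R powr lam * norm (x - 0) powr \<beta> \<le> Cg * (t - s) powr \<alpha> * R"
    using G(1) R by (simp add: mult.assoc mult_left_mono)
  then have "norm ((A t x - A s x) - (A t 0 - A s 0)) \<le> Cg * (t - s) powr \<alpha> * R"
    using G(3)[OF R x] R by (smt (verit) norm_zero)
  then show ?thesis
    using G(2) norm_triangle_ineq[of "A t 0 - A s 0" "(A t x - A s x) - (A t 0 - A s 0)"]
    by (simp add: algebra_simps)
qed

lemma young_germ_defect_growth:
  assumes Cg: "growth_bound Cg" and ab: "0 \<le> a" "b \<le> T" and R: "1 \<le> R"
    and xb: "\<And>r. a \<le> r \<Longrightarrow> r \<le> b \<Longrightarrow> norm (x r) \<le> R" and hx: "holder_bound x a b \<alpha> H" and H: "H \<ge> 0"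
    and su: "a \<le> s" "s \<le> u" "u \<le> t" "t \<le> b"
  shows "norm (young_germ A x s t - young_germ A x s u - young_germ A x u t)
    \<le> (Cg * R powr lam * H powr \<beta>) * (t - s) powr \<theta>"
proof -
  have "norm (young_germ A x s t - young_germ A x s u - young_germ A x u t)
      \<le> Cg * (t - u) powr \<alpha> * R powr lam * norm (x s - x u) powr \<beta>"
    unfolding young_germ_defect using growth_boundD(2)[OF Cg _ su(3) _ R] ab su xb by auto
  also have "norm (x s - x u) powr \<beta> \<le> H powr \<beta> * (u - s) powr (\<beta> * \<alpha>)"
  proof -
    have "norm (x s - x u) powr \<beta> \<le> (H * (u - s) powr \<alpha>) powr \<beta>"
      using holder_boundD[OF hx su(1,2)] su \<beta> by (intro powr_mono2) (auto simp: norm_minus_commute)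
    then show ?thesis using H su by (simp add: powr_mult powr_powr mult.commute)
  qed
  also have "Cg * (t - u) powr \<alpha> * R powr lam * (H powr \<beta> * (u - s) powr (\<beta> * \<alpha>))
      = (Cg * R powr lam * H powr \<beta>) * ((t - u) powr \<alpha> * (u - s) powr (\<beta> * \<alpha>))"
    by (simp add: mult_ac)
  also have "\<dots> \<le> (Cg * R powr lam * H powr \<beta>) * (t - s) powr \<theta>"
    using powr_split_le[of s u t \<alpha> "\<beta> * \<alpha>"] su \<alpha> \<beta> growth_bound_ge_1[OF Cg] ab su
    by (intro mult_left_mono) auto
  finally show ?thesis
    using growth_bound_ge_1[OF Cg] ab su by (simp add: mult_left_mono)
qed

lemma holder_constant_self_bound:
  assumes Cg: "growth_bound Cg" and h: "sewing_const \<theta> * Cg * h powr (\<beta> * \<alpha>) \<le> 1/2"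
    and x: "young_solution x \<xi> c d R M" and ab: "c \<le> a" "a \<le> b" "b \<le> d" "b - a \<le> h"
    and Rb: "1 \<le> Rb" "\<And>r. a \<le> r \<Longrightarrow> r \<le> b \<Longrightarrow> norm (x r) \<le> Rb"
    and H: "H \<ge> 0" "holder_bound x a b \<alpha> H"
  shows "holder_bound x a b \<alpha> (Cg * (1 + Rb) + 1/2 * (Rb powr lam * H powr \<beta>))"
  unfolding holder_bound_def
proof (intro allI impI)
  fix u v assume uv: "a \<le> u" "u \<le> v" "v \<le> b"
  note xp = admissible_pathD[OF young_solutionD(2)[OF x]]
  have ab': "0 \<le> a" "b \<le> T" using xp ab by auto
  define K where "K = Cg * Rb powr lam * H powr \<beta>"
  have K0: "K \<ge> 0" unfolding K_def using growth_bound_ge_1[OF Cg] by simp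
  obtain C where C: "field_bounds R C" using field_bounds_exist by blast
  have "germ_has_integral (young_germ A x) u v (young_integral x u v)"
    using young_integral_exists(1)[OF C young_solutionD(2)[OF x]] uv ab by simp
  then have "norm (young_integral x u v - young_germ A x u v) \<le> sewing_const \<theta> * K * (v - u) powr \<theta>"
    using germ_has_integral_bound[OF uv(2)] partition_sum_sewing_bound[OF \<theta>_gt_1 K0
        young_germ_defect_growth[OF Cg ab' Rb H(2,1), folded K_def] _ uv(1,3)] by blast
  also have "\<dots> \<le> sewing_const \<theta> * K * ((v - u) powr \<alpha> * h powr (\<beta> * \<alpha>))"
  proof -
    have "(v - u) powr \<theta> = (v - u) powr \<alpha> * (v - u) powr (\<beta> * \<alpha>)" by (simp add: powr_add)
    also have "\<dots> \<le> (v - u) powr \<alpha> * h powr (\<beta> * \<alpha>)"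
      using uv ab \<alpha> \<beta> by (intro mult_left_mono powr_mono2) auto
    finally show ?thesis using sewing_const_pos[OF \<theta>_gt_1] K0 by (simp add: mult_left_mono)
  qed
  also have "\<dots> = (sewing_const \<theta> * Cg * h powr (\<beta> * \<alpha>)) * (Rb powr lam * H powr \<beta>) * (v - u) powr \<alpha>"
    unfolding K_def by (simp add: mult_ac)
  also have "\<dots> \<le> 1/2 * (Rb powr lam * H powr \<beta>) * (v - u) powr \<alpha>"
    using h by (intro mult_right_mono) auto
  finally have close: "norm (young_integral x u v - young_germ A x u v)
      \<le> 1/2 * (Rb powr lam * H powr \<beta>) * (v - u) powr \<alpha>" .
  have germ: "norm (young_germ A x u v) \<le> Cg * (v - u) powr \<alpha> * (1 + Rb)"
    unfolding young_germ_def using increment_growth[OF Cg _ uv(2) _ Rb(1) Rb(2)] uv ab' by auto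
  have "norm (x v - x u) = norm (young_integral x u v)"
    using young_solution_increment[OF x] uv ab by simp
  also have "\<dots> \<le> norm (young_integral x u v - young_germ A x u v) + norm (young_germ A x u v)"
    using norm_triangle_ineq[of "young_integral x u v - young_germ A x u v" "young_germ A x u v"] by simp
  finally show "norm (x v - x u) \<le> (Cg * (1 + Rb) + 1/2 * (Rb powr lam * H powr \<beta>)) * (v - u) powr \<alpha>"
    using close germ by (simp add: algebra_simps)
qed

lemma least_holder_constant_le:
  assumes Cg: "growth_bound Cg" and h: "sewing_const \<theta> * Cg * h powr (\<beta> * \<alpha>) \<le> 1/2"
    and x: "young_solution x \<xi> c d R M" and ab: "c \<le> a" "a \<le> b" "b \<le> d" "b - a \<le> h"
    and Rb: "1 \<le> Rb" "\<And>r. a \<le> r \<Longrightarrow> r \<le> b \<Longrightarrow> norm (x r) \<le> Rb"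
    and H: "H \<ge> 0" "holder_bound x a b \<alpha> H" "\<And>H'. H' \<ge> 0 \<Longrightarrow> holder_bound x a b \<alpha> H' \<Longrightarrow> H \<le> H'"
  shows "H \<le> (2 * Cg + 1) * (1 + Rb)"
proof -
  have Cg1: "Cg \<ge> 1" using growth_bound_ge_1[OF Cg] .
  have "H \<le> Cg * (1 + Rb) + 1/2 * (Rb powr lam * H powr \<beta>)"
    using H(3) holder_constant_self_bound[OF Cg h x ab Rb H(1,2)] Cg1 Rb(1) by simp
  moreover have "0 \<le> lam" "lam + \<beta> \<le> 1" using lam by auto
  ultimately have "H \<le> max Rb (2 * (Cg * (1 + Rb)))"
    using le_max_of_sublinear_bound[OF H(1) Rb(1) _ \<beta>(1)] by blast
  also have "\<dots> \<le> (2 * Cg + 1) * (1 + Rb)" using Rb(1) Cg1 by (auto simp: algebra_simps)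
  finally show ?thesis .
qed

text \<open>The self-bound is applied to the least Hoelder constant and the least sup bound on the
  interval; minimality of the sup bound then turns the Hoelder estimate into a bound on \<open>x\<close>.\<close>

lemma norm_growth_short_interval:
  assumes Cg: "growth_bound Cg"
    and h: "sewing_const \<theta> * Cg * h powr (\<beta> * \<alpha>) \<le> 1/2" "(2 * Cg + 1) * h powr \<alpha> \<le> 1/4"
    and x: "young_solution x \<xi> c d R M" and ab: "c \<le> a" "a \<le> b" "b \<le> d" "b - a \<le> h"
    and s: "a \<le> s" "s \<le> b"
  shows "norm (x s) \<le> 2 * norm (x a) + 1"
proof -
  note xp = admissible_pathD[OF young_solutionD(2)[OF x]]
  obtain Rmin where R1: "1 \<le> Rmin" and Rb: "\<And>v. a \<le> v \<Longrightarrow> v \<le> b \<Longrightarrow> norm (x v) \<le> Rmin"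
    and R_least: "\<And>R'. 1 \<le> R' \<Longrightarrow> (\<And>r. a \<le> r \<Longrightarrow> r \<le> b \<Longrightarrow> norm (x r) \<le> R') \<Longrightarrow> Rmin \<le> R'"
    using least_sup_bound[of a b x R] xp(3) ab by auto
  obtain Hmin where H: "Hmin \<ge> 0" "holder_bound x a b \<alpha> Hmin"
    "\<And>H'. H' \<ge> 0 \<Longrightarrow> holder_bound x a b \<alpha> H' \<Longrightarrow> Hmin \<le> H'"
    using least_holder_constant[OF holder_bound_subinterval[OF xp(7) ab(1,3)] xp(6)] by blast
  have H_le: "Hmin \<le> (2 * Cg + 1) * (1 + Rmin)"
    by (rule least_holder_constant_le[OF Cg h(1) x ab R1 Rb H])
  have near: "norm (x r) \<le> norm (x a) + (1 + Rmin) / 4" if r: "a \<le> r" "r \<le> b" for r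
  proof -
    have "norm (x r - x a) \<le> Hmin * (r - a) powr \<alpha>" using holder_boundD[OF H(2) order.refl r] .
    also have "\<dots> \<le> (2 * Cg + 1) * (1 + Rmin) * h powr \<alpha>"
      using H_le r ab H(1) \<alpha> R1 growth_bound_ge_1[OF Cg] by (intro mult_mono powr_mono2) auto
    also have "\<dots> = ((2 * Cg + 1) * h powr \<alpha>) * (1 + Rmin)" by (simp add: mult_ac)
    also have "\<dots> \<le> 1/4 * (1 + Rmin)" using h(2) R1 by (intro mult_right_mono) auto
    finally show ?thesis using norm_triangle_ineq2[of "x r" "x a"] by linarith
  qed
  have Rmin_le: "Rmin \<le> max 1 (norm (x a) + (1 + Rmin) / 4)"
    using R_least[of "max 1 (norm (x a) + (1 + Rmin) / 4)"] near by (simp add: max.coboundedI2)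
  have "Rmin \<le> 2 * norm (x a) + 1"
  proof (cases "1 \<le> norm (x a) + (1 + Rmin) / 4")
    case True
    then have "Rmin \<le> norm (x a) + (1 + Rmin) / 4" using Rmin_le by simp
    then have "4 * Rmin \<le> 4 * norm (x a) + (1 + Rmin)" by (simp add: field_simps)
    then show ?thesis using norm_ge_zero[of "x a"] by linarith
  next
    case False
    then have "Rmin \<le> 1" using Rmin_le by simp
    then show ?thesis using norm_ge_zero[of "x a"] by linarith
  qed
  then show ?thesis using Rb[OF s] by simp
qed

lemma apriori_step:
  obtains h where "h > 0" "\<And>x \<xi> c d R M a b s. young_solution x \<xi> c d R M \<Longrightarrow> c \<le> a \<Longrightarrow> a \<le> b \<Longrightarrow>
    b \<le> d \<Longrightarrow> b - a \<le> h \<Longrightarrow> a \<le> s \<Longrightarrow> s \<le> b \<Longrightarrow> norm (x s) \<le> 2 * norm (x a) + 1"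
proof -
  obtain Cg where Cg: "growth_bound Cg" using growth_bound_exists by blast
  have "sewing_const \<theta> * Cg \<ge> 0" "2 * Cg + 1 \<ge> 0"
    using sewing_const_pos[OF \<theta>_gt_1] growth_bound_ge_1[OF Cg] by auto
  then obtain h1 h2 where h: "h1 > 0" "h2 > 0"
    "\<And>h. 0 \<le> h \<Longrightarrow> h \<le> h1 \<Longrightarrow> sewing_const \<theta> * Cg * h powr (\<beta> * \<alpha>) \<le> 1/2"
    "\<And>h. 0 \<le> h \<Longrightarrow> h \<le> h2 \<Longrightarrow> (2 * Cg + 1) * h powr \<alpha> \<le> 1/4"
    using exists_small_powr_bound[of "\<beta> * \<alpha>" "sewing_const \<theta> * Cg" "1/2"]
      exists_small_powr_bound[of \<alpha> "2 * Cg + 1" "1/4"] \<alpha> \<beta>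
    by (metis mult_pos_pos zero_less_divide_iff zero_less_numeral zero_less_one)
  have "min h1 h2 > 0" using h by simp
  have small: "sewing_const \<theta> * Cg * min h1 h2 powr (\<beta> * \<alpha>) \<le> 1/2"
    "(2 * Cg + 1) * min h1 h2 powr \<alpha> \<le> 1/4"
    using h(3)[of "min h1 h2"] h(4)[of "min h1 h2"] \<open>min h1 h2 > 0\<close> by auto
  show ?thesis
  proof (rule that[OF \<open>min h1 h2 > 0\<close>])
    fix x \<xi> c d R M a b s
    assume "young_solution x \<xi> c d R M" "c \<le> a" "a \<le> b" "b \<le> d" "b - a \<le> min h1 h2" "a \<le> s" "s \<le> b"
    then show "norm (x s) \<le> 2 * norm (x a) + 1" by (rule norm_growth_short_interval[OF Cg small])
  qed
qed

lemma solutions_bounded: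
  obtains B where "\<And>I x t. is_solution T \<alpha> \<beta> A x0 I x \<Longrightarrow> t \<in> I \<Longrightarrow> norm (x t) \<le> B"
proof -
  obtain h where "h > 0" and h: "\<And>x \<xi> c d R M a b s. young_solution x \<xi> c d R M \<Longrightarrow> c \<le> a \<Longrightarrow> a \<le> b \<Longrightarrow>
    b \<le> d \<Longrightarrow> b - a \<le> h \<Longrightarrow> a \<le> s \<Longrightarrow> s \<le> b \<Longrightarrow> norm (x s) \<le> 2 * norm (x a) + 1"
    using apriori_step by blast
  define B where "B k = (norm x0 + 1) * 3 ^ k" for k :: nat
  have B1: "B k \<ge> 1" for k
    using mult_mono[of 1 "norm x0 + 1" 1 "3 ^ k"] unfolding B_def by simp
  obtain N :: nat where "T / h < real N" using reals_Archimedean2 by blast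
  then have TN: "T \<le> real N * h" using \<open>h > 0\<close> by (simp add: field_simps)
  have "norm (x t) \<le> B N" if S: "is_solution T \<alpha> \<beta> A x0 I x" "t \<in> I" for I x t
  proof -
    obtain R M where x: "young_solution x x0 0 t R M" using is_solution_imp_young_solution[OF S] .
    note xp = young_solutionD[OF x] admissible_pathD[OF young_solutionD(2)[OF x]]
    have steps: "\<forall>s. 0 \<le> s \<and> s \<le> min (real k * h) t \<longrightarrow> norm (x s) \<le> B k" for k
    proof (induction k)
      case 0
      then show ?case using xp(3) unfolding B_def by auto
    next
      case (Suc k)
      define a b where "a = min (real k * h) t" and "b = min (real (Suc k) * h) t"
      have ab: "0 \<le> a" "a \<le> b" "b \<le> t" "b - a \<le> h"
        unfolding a_def b_def using \<open>h > 0\<close> xp(1) by (auto simp: algebra_simps min_def)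
      have "norm (x a) \<le> B k" using Suc ab unfolding a_def by auto
      then have late: "norm (x s) \<le> B (Suc k)" if "a \<le> s" "s \<le> b" for s
        using h[OF x _ ab(2,3,4) that] ab(1) B1[of k] unfolding B_def by simp
      have "B k \<le> B (Suc k)" unfolding B_def by simp
      show ?case
      proof (intro allI impI)
        fix s assume s: "0 \<le> s \<and> s \<le> min (real (Suc k) * h) t"
        show "norm (x s) \<le> B (Suc k)"
        proof (cases "s \<le> a")
          case True
          then have "norm (x s) \<le> B k" using Suc s unfolding a_def by auto
          then show ?thesis using \<open>B k \<le> B (Suc k)\<close> by simp
        qed (use late s in \<open>auto simp: b_def\<close>)
      qed
    qed
    have "t \<le> T" using admissible_pathD(2)[OF young_solutionD(2)[OF x]] .
    then show ?thesis using steps[of N] TN xp(1) by auto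
  qed
  then show ?thesis using that by blast
qed

lemma global_solution:
  obtains x where "is_solution T \<alpha> \<beta> A x0 {0..T} x"
    "\<And>y. is_solution T \<alpha> \<beta> A x0 {0..T} y \<Longrightarrow> \<forall>t\<in>{0..T}. y t = x t"
proof -
  obtain B where B: "\<And>I x t. is_solution T \<alpha> \<beta> A x0 I x \<Longrightarrow> t \<in> I \<Longrightarrow> norm (x t) \<le> B"
    using solutions_bounded by blast
  have S: "is_solution T \<alpha> \<beta> A x0 (max_interval x0) (max_solution x0)" by (rule max_interval_solution)
  have "max_interval x0 = {0..T}"
  proof (rule interval_from_0_cases[of "max_interval x0"])
    show "is_interval (max_interval x0)" "0 \<in> max_interval x0" "max_interval x0 \<subseteq> {0..T}"
      using S unfolding is_solution_def by auto
  next
    fix c assume "max_interval x0 = {0..c}"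
    then show ?thesis using max_interval_closed_imp_T by blast
  next
    fix c assume c: "0 < c" "max_interval x0 = {0..<c}"
    then have "\<forall>\<^sub>F t in at_left c. B + 1 \<le> norm (max_solution x0 t)"
      using max_interval_open_blowup[OF c(2,1)] unfolding filterlim_at_top by blast
    moreover have "\<forall>\<^sub>F t in at_left c. t \<in> max_interval x0"
      by (rule eventually_mono[OF eventually_at_left_real[OF c(1)]]) (simp add: c(2))
    ultimately have "\<forall>\<^sub>F t in at_left c. False"
    proof eventually_elim
      case (elim t)
      then show False using B[OF S, of t] by simp
    qed
    then have "at_left c = (bot :: real filter)" by (simp add: eventually_False)
    then show ?thesis using trivial_limit_at_left_real[of c] by simp
  qed
  then have S': "is_solution T \<alpha> \<beta> A x0 {0..T} (max_solution x0)" using S by simp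
  show ?thesis
  proof (rule that[OF S'])
    fix y assume "is_solution T \<alpha> \<beta> A x0 {0..T} y"
    then show "\<forall>t\<in>{0..T}. y t = max_solution x0 t" using solutions_agree[OF _ S'] by blast
  qed
qed

end

theorem mainTheorem13:
  fixes A :: "real \<Rightarrow> 'v::{banach, second_countable_topology} \<Rightarrow> 'v"
    and T \<alpha> \<beta> :: real
  assumes T: "T > 0"
    and \<alpha>: "0 < \<alpha>" "\<alpha> < 1" and \<beta>: "0 < \<beta>" "\<beta> < 1"
    and \<alpha>\<beta>: "\<alpha> * (1 + \<beta>) > 1"
    and A0: "\<forall>x. A 0 x = 0"
    and A: "loc_holder_field_1 T \<alpha> \<beta> A"
  shows "(\<forall>x0. \<exists>I x. is_max_solution T \<alpha> \<beta> A x0 I x \<and>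
            (I = {0..T} \<or>
             (\<exists>T'. 0 < T' \<and> T' \<le> T \<and> I = {0..<T'} \<and>
                   filterlim (\<lambda>t. norm (x t)) at_top (at_left T'))) \<and>
            (\<forall>J y. is_max_solution T \<alpha> \<beta> A x0 J y \<longrightarrow> J = I \<and> (\<forall>t\<in>I. y t = x t)))
       \<and> (\<forall>lam. 0 < lam \<and> lam \<le> 1 \<and> \<beta> + lam \<le> 1 \<and> growth_holder_field T \<alpha> \<beta> lam A \<longrightarrow>
            (\<forall>x0. \<exists>x. is_solution T \<alpha> \<beta> A x0 {0..T} x \<and>
                 (\<forall>y. is_solution T \<alpha> \<beta> A x0 {0..T} y \<longrightarrow> (\<forall>t\<in>{0..T}. y t = x t))))"
proof -
  obtain DA :: "real \<Rightarrow> 'v \<Rightarrow> ('v \<Rightarrow>\<^sub>L 'v)" where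
    A_holder: "loc_holder_field T \<alpha> \<beta> A" and
    A_deriv: "\<forall>t\<in>{0..T}. \<forall>x. (A t has_derivative blinfun_apply (DA t x)) (at x)" and
    DA_holder: "loc_holder_field T \<alpha> \<beta> DA"
    using A unfolding loc_holder_field_1_def by blast
  interpret young_field T \<alpha> \<beta> A DA
    by unfold_locales (use T \<alpha> \<beta> \<alpha>\<beta> A_holder A_deriv DA_holder in auto)
  have maximal: "\<exists>I x. is_max_solution T \<alpha> \<beta> A x0 I x \<and>
      (I = {0..T} \<or> (\<exists>T'. 0 < T' \<and> T' \<le> T \<and> I = {0..<T'} \<and> filterlim (\<lambda>t. norm (x t)) at_top (at_left T'))) \<and>
      (\<forall>J y. is_max_solution T \<alpha> \<beta> A x0 J y \<longrightarrow> J = I \<and> (\<forall>t\<in>I. y t = x t))" for x0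
    by (rule maximal_solution[of x0]) blast
  have global: "\<exists>x. is_solution T \<alpha> \<beta> A x0 {0..T} x \<and>
      (\<forall>y. is_solution T \<alpha> \<beta> A x0 {0..T} y \<longrightarrow> (\<forall>t\<in>{0..T}. y t = x t))"
    if "0 < lam" "\<beta> + lam \<le> 1" "growth_holder_field T \<alpha> \<beta> lam A" for lam x0
  proof -
    interpret young_field_growth T \<alpha> \<beta> A DA lam
      by unfold_locales (use that in auto)
    show ?thesis by (rule global_solution[of x0]) blast
  qed
  show ?thesis using maximal global by blast
qed

end
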